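(* Let $\beta\ge5$ and $\epsilon\in\{1,-1\}$. (a) There is no tight chiral $4$-polytope of type $\{4,2^\beta,8\}$ whose standard generators satisfy $\sigma_2^{-1}\sigma_1=\sigma_1^{-1}\sigma_2^{1+2^{\beta-1}}$ and $\sigma_2\sigma_3^2=\sigma_3^2\sigma_2^{1+\epsilon2^{\beta-2}}$. (b) There is no tight chiral $4$-polytope of type $\{4,2^\beta,2^{\beta-1}\}$ whose standard generators satisfy $\sigma_2^{-1}\sigma_1=\sigma_1^{-1}\sigma_2^{1+2^{\beta-1}}$, $\sigma_3^{-1}\sigma_2=\sigma_2^{3+\epsilon2^{\beta-2}}\sigma_3^{1-2^{\beta-2}}$ and $\sigma_3\sigma_2^{-1}=\sigma_2^{-3+\epsilon2^{\beta-2}}\sigma_3^{-1+2^{\beta-2}}$.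
   Context: For a chiral polytope with base flag $\Phi$, the standard generators $\sigma_1,\sigma_2,\sigma_3$ of its automorphism group are the automorphisms with $\Phi\sigma_i=\Phi^{i(i-1)}$, where $\Phi^j$ is the flag differing from $\Phi$ only in its $j$-face; for type $\{p,q,r\}$ they have orders $p,q,r$ and satisfy $(\sigma_1\sigma_2)^2=(\sigma_2\sigma_3)^2=(\sigma_1\sigma_2\sigma_3)^2=1$. Tight: type $\{p,q,r\}$ with exactly $2pqr$ flags. *)

theory Defs
  imports "HOL-Algebra.Bij"
begin

definition po_chain :: "'a set \<Rightarrow> ('a \<Rightarrow> 'a \<Rightarrow> bool) \<Rightarrow> 'a set \<Rightarrow> bool" where
  "po_chain P leq C \<longleftrightarrow> C \<subseteq> P \<and> (\<forall>x\<in>C. \<forall>y\<in>C. leq x y \<or> leq y x)"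

definition is_flag :: "'a set \<Rightarrow> ('a \<Rightarrow> 'a \<Rightarrow> bool) \<Rightarrow> 'a set \<Rightarrow> bool" where
  "is_flag P leq \<Phi> \<longleftrightarrow> po_chain P leq \<Phi> \<and> (\<forall>x\<in>P. po_chain P leq (insert x \<Phi>) \<longrightarrow> x \<in> \<Phi>)"

definition face_rank :: "'a set \<Rightarrow> ('a \<Rightarrow> 'a \<Rightarrow> bool) \<Rightarrow> 'a \<Rightarrow> int \<Rightarrow> bool" where
  "face_rank P leq F j \<longleftrightarrow> F \<in> P \<and>
     (\<exists>\<Phi>. is_flag P leq \<Phi> \<and> F \<in> \<Phi> \<and> int (card {G\<in>\<Phi>. G \<noteq> F \<and> leq G F}) - 1 = j)"

definition adjacent_flags :: "'a set \<Rightarrow> 'a set \<Rightarrow> bool" where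
  "adjacent_flags \<Phi> \<Psi> \<longleftrightarrow> card (\<Phi> - \<Psi>) = 1 \<and> card (\<Psi> - \<Phi>) = 1"

definition abstract_polytope4 :: "'a set \<Rightarrow> ('a \<Rightarrow> 'a \<Rightarrow> bool) \<Rightarrow> bool" where
  "abstract_polytope4 P leq \<longleftrightarrow>
     (\<forall>x\<in>P. leq x x) \<and>
     (\<forall>x\<in>P. \<forall>y\<in>P. leq x y \<and> leq y x \<longrightarrow> x = y) \<and>
     (\<forall>x\<in>P. \<forall>y\<in>P. \<forall>z\<in>P. leq x y \<and> leq y z \<longrightarrow> leq x z) \<and>
     (\<exists>m\<in>P. \<forall>x\<in>P. leq m x) \<and> (\<exists>M\<in>P. \<forall>x\<in>P. leq x M) \<and>
     (\<forall>\<Phi>. is_flag P leq \<Phi> \<longrightarrow> finite \<Phi> \<and> card \<Phi> = 6) \<and>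
     (\<forall>F G j. face_rank P leq F (j - 1) \<and> face_rank P leq G (j + 1) \<and> leq F G \<longrightarrow>
        card {H\<in>P. H \<noteq> F \<and> H \<noteq> G \<and> leq F H \<and> leq H G} = 2) \<and>
     (\<forall>\<Phi> \<Psi>. is_flag P leq \<Phi> \<and> is_flag P leq \<Psi> \<longrightarrow>
        (\<lambda>A B. is_flag P leq A \<and> is_flag P leq B \<and> adjacent_flags A B \<and>
               \<Phi> \<inter> \<Psi> \<subseteq> A \<and> \<Phi> \<inter> \<Psi> \<subseteq> B)\<^sup>*\<^sup>* \<Phi> \<Psi>)"

definition flag_adj :: "'a set \<Rightarrow> ('a \<Rightarrow> 'a \<Rightarrow> bool) \<Rightarrow> 'a set \<Rightarrow> int \<Rightarrow> 'a set \<Rightarrow> bool" where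
  "flag_adj P leq \<Phi> j \<Psi> \<longleftrightarrow> is_flag P leq \<Psi> \<and> \<Psi> \<noteq> \<Phi> \<and>
     (\<forall>F\<in>\<Phi>. \<not> face_rank P leq F j \<longrightarrow> F \<in> \<Psi>)"

definition polytope_aut :: "'a set \<Rightarrow> ('a \<Rightarrow> 'a \<Rightarrow> bool) \<Rightarrow> ('a \<Rightarrow> 'a) \<Rightarrow> bool" where
  "polytope_aut P leq \<sigma> \<longleftrightarrow> \<sigma> \<in> Bij P \<and> (\<forall>x\<in>P. \<forall>y\<in>P. leq x y \<longleftrightarrow> leq (\<sigma> x) (\<sigma> y))"

definition same_orbit :: "'a set \<Rightarrow> ('a \<Rightarrow> 'a \<Rightarrow> bool) \<Rightarrow> 'a set \<Rightarrow> 'a set \<Rightarrow> bool" where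
  "same_orbit P leq \<Phi> \<Psi> \<longleftrightarrow> (\<exists>\<sigma>. polytope_aut P leq \<sigma> \<and> \<sigma> ` \<Phi> = \<Psi>)"

definition chiral4 :: "'a set \<Rightarrow> ('a \<Rightarrow> 'a \<Rightarrow> bool) \<Rightarrow> bool" where
  "chiral4 P leq \<longleftrightarrow> abstract_polytope4 P leq \<and>
     (\<exists>\<Phi> \<Psi>. is_flag P leq \<Phi> \<and> is_flag P leq \<Psi> \<and> \<not> same_orbit P leq \<Phi> \<Psi> \<and>
        (\<forall>X. is_flag P leq X \<longrightarrow> same_orbit P leq \<Phi> X \<or> same_orbit P leq \<Psi> X)) \<and>
     (\<forall>\<Phi> \<Psi> j. is_flag P leq \<Phi> \<and> 0 \<le> j \<and> j \<le> 3 \<and> flag_adj P leq \<Phi> j \<Psi> \<longrightarrow>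
        \<not> same_orbit P leq \<Phi> \<Psi>)"

text \<open>Schlaefli type {p,q,r}: every 2-face is a p-gon, every section F3/F0 is a
q-gon, every section F4/F1 is an r-gon.\<close>
definition has_type4 :: "'a set \<Rightarrow> ('a \<Rightarrow> 'a \<Rightarrow> bool) \<Rightarrow> nat \<Rightarrow> nat \<Rightarrow> nat \<Rightarrow> bool" where
  "has_type4 P leq p q r \<longleftrightarrow>
     (\<forall>F. face_rank P leq F 2 \<longrightarrow> card {x\<in>P. face_rank P leq x 0 \<and> leq x F} = p) \<and>
     (\<forall>F0 F3. face_rank P leq F0 0 \<and> face_rank P leq F3 3 \<and> leq F0 F3 \<longrightarrow>
        card {e\<in>P. face_rank P leq e 1 \<and> leq F0 e \<and> leq e F3} = q) \<and>
     (\<forall>F1. face_rank P leq F1 1 \<longrightarrow> card {f\<in>P. face_rank P leq f 2 \<and> leq F1 f} = r)"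

definition tight4 :: "'a set \<Rightarrow> ('a \<Rightarrow> 'a \<Rightarrow> bool) \<Rightarrow> nat \<Rightarrow> nat \<Rightarrow> nat \<Rightarrow> bool" where
  "tight4 P leq p q r \<longleftrightarrow> has_type4 P leq p q r \<and>
     finite {\<Phi>. is_flag P leq \<Phi>} \<and> card {\<Phi>. is_flag P leq \<Phi>} = 2 * p * q * r"

text \<open>Automorphisms act on the right: Phi(ab) = (Phi a) b, so the paper's
product ab is the map "first a, then b", i.e. b composed with a.\<close>
definition amul :: "'a set \<Rightarrow> ('a \<Rightarrow> 'a) \<Rightarrow> ('a \<Rightarrow> 'a) \<Rightarrow> ('a \<Rightarrow> 'a)" where
  "amul P a b = b \<otimes>\<^bsub>BijGroup P\<^esub> a"

definition apow :: "'a set \<Rightarrow> ('a \<Rightarrow> 'a) \<Rightarrow> int \<Rightarrow> ('a \<Rightarrow> 'a)" where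
  "apow P a k = a [^]\<^bsub>BijGroup P\<^esub> k"

definition std_gens :: "'a set \<Rightarrow> ('a \<Rightarrow> 'a \<Rightarrow> bool) \<Rightarrow> 'a set \<Rightarrow>
    ('a \<Rightarrow> 'a) \<Rightarrow> ('a \<Rightarrow> 'a) \<Rightarrow> ('a \<Rightarrow> 'a) \<Rightarrow> bool" where
  "std_gens P leq \<Phi> s1 s2 s3 \<longleftrightarrow> is_flag P leq \<Phi> \<and>
     (\<forall>(i, s) \<in> {(1::int, s1), (2, s2), (3, s3)}.
        polytope_aut P leq s \<and> (\<exists>\<Psi>. flag_adj P leq \<Phi> i \<Psi> \<and> flag_adj P leq \<Psi> (i - 1) (s ` \<Phi>)))"

end

theory Submission
  imports Defs "HOL-Algebra.Multiplicative_Group"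
begin

text \<open>
  Write a, b, c for the inverses of \<sigma>1, \<sigma>2, \<sigma>3. Automorphisms act on the right, so inversion
  turns each word of the paper into the same word in a, b, c composed in BijGroup P; the standard
  relations say that ab, bc and abc are involutions.

  In a chiral polytope the order of \<sigma>j equals the number of (j-1)-faces of the rank 2 section
  F(j+1)/F(j-2) of the base flag: the flags of that section are the images of the base flag under
  the powers of \<sigma>j together with their j-adjacent flags, and chirality keeps these two families
  apart. Hence b has order 2^\<beta>, while the additional relations force b^(2^(\<beta>-1)) = 1.
  In case (a), c^2 acts on <b> as b \<mapsto> b^\<mu> with \<mu> = 1 + \<epsilon> 2^(\<beta>-2); conjugating by a shows that
  c^2 commutes with a^2, so c^-2 acts in the same way and b^(\<mu>^2 - 1) = 1, where
  \<mu>^2 - 1 = 2^(\<beta>-1) modulo 2^\<beta>. In case (b), conjugating the relation for c^-1 b by a and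
  comparing the result with the relation for c b^-1 gives b^(\<epsilon> 2^(\<beta>-1)) = 1.
\<close>

context group begin

lemma inv_cancel_left [simp]: "x \<in> carrier G \<Longrightarrow> y \<in> carrier G \<Longrightarrow> x \<otimes> (inv x \<otimes> y) = y"
  by (simp add: m_assoc [symmetric])

lemma inv_cancel_left' [simp]: "x \<in> carrier G \<Longrightarrow> y \<in> carrier G \<Longrightarrow> inv x \<otimes> (x \<otimes> y) = y"
  by (simp add: m_assoc [symmetric])

lemma int_pow_mult_assoc:
  "x \<in> carrier G \<Longrightarrow> y \<in> carrier G \<Longrightarrow> x [^] (i::int) \<otimes> (x [^] (j::int) \<otimes> y) = x [^] (i + j) \<otimes> y"
  by (simp add: m_assoc [symmetric] int_pow_mult)

lemma inv_eq_int_pow: "x \<in> carrier G \<Longrightarrow> inv x = x [^] (-1::int)"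
  by (simp add: int_pow_neg)

lemma inv_int_pow: "x \<in> carrier G \<Longrightarrow> inv (x [^] (k::int)) = x [^] (-k)"
  by (simp add: int_pow_neg)

lemma int_pow_two: "x \<in> carrier G \<Longrightarrow> x [^] (2::int) = x \<otimes> x"
  using int_pow_mult [of x 1 1] by simp

lemma int_pow_odd: "x \<in> carrier G \<Longrightarrow> x [^] (2 * t + 1::int) = (x \<otimes> x) [^] t \<otimes> x"
  by (simp add: int_pow_mult int_pow_pow int_pow_two [symmetric])

lemma int_pow_eq_if_period:
  assumes "x \<in> carrier G" "x [^] (n::int) = \<one>" "i = j + n * k"
  shows "x [^] (i::int) = x [^] j"
  using assms by (simp add: int_pow_mult int_pow_pow [symmetric])

lemma conj_nat_pow:
  assumes "g \<in> carrier G" "x \<in> carrier G"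
  shows "(inv g \<otimes> x \<otimes> g) [^] (n::nat) = inv g \<otimes> x [^] n \<otimes> g"
proof (induction n)
  case (Suc n)
  then show ?case using assms by (simp add: m_assoc)
qed (use assms in simp)

lemma conj_int_pow:
  assumes g: "g \<in> carrier G" and x: "x \<in> carrier G"
  shows "(inv g \<otimes> x \<otimes> g) [^] (k::int) = inv g \<otimes> x [^] k \<otimes> g"
proof (cases k rule: int_cases2)
  case (nonneg n)
  then show ?thesis using conj_nat_pow [OF assms] by (simp add: int_pow_int)
next
  case (nonpos n)
  then show ?thesis
    using conj_nat_pow [OF assms, of n] assms by (simp add: int_pow_neg_int inv_mult_group m_assoc)
qed

lemma conj_int_pow':
  "g \<in> carrier G \<Longrightarrow> x \<in> carrier G \<Longrightarrow> (g \<otimes> x \<otimes> inv g) [^] (k::int) = g \<otimes> x [^] k \<otimes> inv g"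
  using conj_int_pow [of "inv g" x k] by simp

lemma commute_nat_pow_twisted:
  assumes x: "x \<in> carrier G" and c: "c \<in> carrier G" and z: "z \<in> carrier G"
    and twist: "x \<otimes> c = z \<otimes> c \<otimes> x" and central: "z \<otimes> c = c \<otimes> z"
  shows "x \<otimes> c [^] (n::nat) = z [^] n \<otimes> c [^] n \<otimes> x"
proof (induction n)
  case (Suc n)
  have zcn: "z \<otimes> c [^] n = c [^] n \<otimes> z" using central z c by (simp add: group_commutes_pow)
  have "x \<otimes> c [^] Suc n = (x \<otimes> c [^] n) \<otimes> c" using x c by (simp add: m_assoc)
  also have "\<dots> = z [^] n \<otimes> ((c [^] n \<otimes> z) \<otimes> c \<otimes> x)" using Suc x c z by (simp add: m_assoc twist)
  also have "\<dots> = z [^] Suc n \<otimes> c [^] Suc n \<otimes> x" using x c z by (simp add: zcn [symmetric] m_assoc)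
  finally show ?case .
qed (use x in simp)

end

section \<open>Relations in the rotation group\<close>

locale rotation_triple = group +
  fixes a b c
  assumes a_closed [simp]: "a \<in> carrier G"
    and b_closed [simp]: "b \<in> carrier G"
    and c_closed [simp]: "c \<in> carrier G"
    and ab_involution: "a \<otimes> b \<otimes> a \<otimes> b = \<one>"
    and bc_involution: "b \<otimes> c \<otimes> b \<otimes> c = \<one>"
    and abc_involution: "a \<otimes> b \<otimes> c \<otimes> a \<otimes> b \<otimes> c = \<one>"
begin

lemma aba: "a \<otimes> (b \<otimes> a) = inv b"
  using inv_equality [OF ab_involution] by (simp add: m_assoc)

lemma ba: "b \<otimes> a = inv a \<otimes> inv b"
  using aba by (metis inv_solve_left m_closed inv_closed b_closed a_closed)

lemma inv_ab: "inv (a \<otimes> b) = a \<otimes> b"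
  using inv_equality [of "a \<otimes> b" "a \<otimes> b"] ab_involution by (simp add: m_assoc)

lemma bc: "b \<otimes> c = inv c \<otimes> inv b"
proof -
  have "inv (b \<otimes> c) = b \<otimes> c"
    using inv_equality [of "b \<otimes> c" "b \<otimes> c"] bc_involution by (simp add: m_assoc)
  then show ?thesis by (simp add: inv_mult_group)
qed

lemma cbc: "c \<otimes> (b \<otimes> c) = inv b"
  by (simp add: bc)

lemma c_conj_b: "c \<otimes> (b \<otimes> inv c) = inv b \<otimes> (inv c \<otimes> inv c)"
proof -
  have "c \<otimes> (b \<otimes> inv c) = (c \<otimes> (b \<otimes> c)) \<otimes> (inv c \<otimes> inv c)" by (simp add: m_assoc)
  then show ?thesis by (simp add: cbc)
qed

lemma inv_a: "inv a = b \<otimes> (c \<otimes> (a \<otimes> (b \<otimes> c)))"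
proof -
  have "a \<otimes> (b \<otimes> (c \<otimes> (a \<otimes> (b \<otimes> c)))) = \<one>" using abc_involution by (simp add: m_assoc)
  then show ?thesis by (metis inv_equality inv_comm m_closed a_closed b_closed c_closed)
qed

lemma conj_a_b_pow: "inv a \<otimes> (b [^] (k::int) \<otimes> a) = (inv a \<otimes> (inv a \<otimes> inv b)) [^] k"
  using conj_int_pow [of a b k] by (simp add: m_assoc ba)

lemma conj_a_c_pow: "inv a \<otimes> (c [^] (k::int) \<otimes> a) = b \<otimes> (c [^] (-k) \<otimes> inv b)"
proof -
  have "a \<otimes> b \<otimes> (c \<otimes> a \<otimes> (b \<otimes> c)) = \<one>" using abc_involution by (simp add: m_assoc)
  then have "inv (a \<otimes> b) = c \<otimes> a \<otimes> (b \<otimes> c)"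
    by (metis inv_equality inv_comm m_closed a_closed b_closed c_closed)
  then have "c \<otimes> a \<otimes> (b \<otimes> c) = a \<otimes> b" by (simp add: inv_ab)
  then have "c \<otimes> a = a \<otimes> b \<otimes> inv (b \<otimes> c)"
    by (metis inv_solve_right m_closed a_closed b_closed c_closed)
  then have "inv a \<otimes> c \<otimes> a = b \<otimes> inv c \<otimes> inv b"
    by (simp add: m_assoc inv_mult_group)
  then have "inv a \<otimes> c [^] k \<otimes> a = b \<otimes> inv c [^] k \<otimes> inv b"
    using conj_int_pow [of a c k] conj_int_pow' [of b "inv c" k] by simp
  then show ?thesis by (simp add: m_assoc int_pow_inv int_pow_neg)
qed

end

text \<open>With e = 2^(\<beta>-5): \<sigma>2 has order dividing 2^\<beta> and \<sigma>2^-1 \<sigma>1 = \<sigma>1^-1 \<sigma>2^(1 + 2^(\<beta>-1)).\<close>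

locale twisted_rotation_triple = rotation_triple +
  fixes e :: int
  assumes b_period: "b [^] (32 * e) = \<one>"
    and twist: "inv b \<otimes> a = inv a \<otimes> b [^] (1 + 16 * e)"
begin

lemma aab_aa: "a \<otimes> (a \<otimes> (b \<otimes> (a \<otimes> a))) = b [^] (1 + 16 * e)"
proof -
  have "a \<otimes> (inv b \<otimes> a) = b [^] (1 + 16 * e)" by (simp add: twist)
  then show ?thesis by (simp add: aba [symmetric] m_assoc)
qed

lemma conj_a_b_square: "(inv a \<otimes> (inv a \<otimes> inv b)) \<otimes> (inv a \<otimes> (inv a \<otimes> inv b)) = b [^] (-(2 + 16 * e))"
proof -
  have "inv (a \<otimes> (a \<otimes> (b \<otimes> (a \<otimes> a)))) = inv (b [^] (1 + 16 * e))" by (simp only: aab_aa)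
  then have aba_inv: "inv a \<otimes> (inv a \<otimes> (inv b \<otimes> (inv a \<otimes> inv a))) = b [^] (-(1 + 16 * e))"
    by (simp add: inv_mult_group m_assoc inv_int_pow)
  have "(inv a \<otimes> (inv a \<otimes> inv b)) \<otimes> (inv a \<otimes> (inv a \<otimes> inv b))
      = (inv a \<otimes> (inv a \<otimes> (inv b \<otimes> (inv a \<otimes> inv a)))) \<otimes> inv b"
    by (simp add: m_assoc)
  also have "\<dots> = b [^] (-(1 + 16 * e)) \<otimes> b [^] (-1::int)"
    by (simp only: aba_inv) (simp add: int_pow_neg)
  also have "\<dots> = b [^] (-(2 + 16 * e))" by (simp flip: int_pow_mult)
  finally show ?thesis .
qed

lemma c_conj_aa: "c \<otimes> (inv a \<otimes> (inv a \<otimes> inv c)) = b [^] (16 * e) \<otimes> (inv a \<otimes> inv a)"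
proof -
  have "a \<otimes> (a \<otimes> b) = (a \<otimes> (a \<otimes> (b \<otimes> (a \<otimes> a)))) \<otimes> (inv a \<otimes> inv a)"
    by (simp add: m_assoc)
  then have aab: "a \<otimes> (a \<otimes> b) = b [^] (1 + 16 * e) \<otimes> (inv a \<otimes> inv a)"
    by (simp only: aab_aa)
  have bcbc: "b \<otimes> (c \<otimes> (b \<otimes> (c \<otimes> x))) = x" if "x \<in> carrier G" for x
    using bc_involution that by (simp add: m_assoc [symmetric])
  have "c \<otimes> (inv a \<otimes> (inv a \<otimes> inv c)) = (c \<otimes> (b \<otimes> c)) \<otimes> (a \<otimes> (a \<otimes> b))"
    by (simp add: inv_a m_assoc bcbc)
  also have "\<dots> = b [^] (16 * e) \<otimes> (inv a \<otimes> inv a)"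
    by (simp add: cbc aab m_assoc int_pow_mult)
  finally show ?thesis .
qed

end

text \<open>Case (a): type {4, 2^\<beta>, 8} and \<sigma>2 \<sigma>3^2 = \<sigma>3^2 \<sigma>2^(1 + \<epsilon> 2^(\<beta>-2)).\<close>

locale relations_type_8 = twisted_rotation_triple +
  fixes \<epsilon> :: int
  assumes sign: "\<epsilon> = 1 \<or> \<epsilon> = -1"
    and c_period: "c [^] (8::int) = \<one>"
    and b_cc: "b \<otimes> c [^] (2::int) = c [^] (2::int) \<otimes> b [^] (1 + \<epsilon> * (8 * e))"
begin

abbreviation "\<mu> \<equiv> 1 + \<epsilon> * (8 * e)"

lemma cc_conj_b_pow: "c [^] (-2::int) \<otimes> (b [^] (j::int) \<otimes> c [^] (2::int)) = b [^] (\<mu> * j)"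
proof -
  have "inv (c [^] (2::int)) \<otimes> b \<otimes> c [^] (2::int) = b [^] \<mu>"
    by (simp add: m_assoc b_cc)
  then have "inv (c [^] (2::int)) \<otimes> b [^] j \<otimes> c [^] (2::int) = b [^] (\<mu> * j)"
    using conj_int_pow [of "c [^] (2::int)" b j] by (simp add: int_pow_pow)
  then show ?thesis by (simp add: m_assoc inv_int_pow)
qed

lemma cc_inv_b_pow: "c [^] (-2::int) \<otimes> b [^] (j::int) = b [^] (\<mu> * j) \<otimes> c [^] (-2::int)"
proof -
  have "c [^] (-2::int) \<otimes> b [^] j = (c [^] (-2::int) \<otimes> (b [^] j \<otimes> c [^] (2::int))) \<otimes> c [^] (-2::int)"
    by (simp add: m_assoc int_pow_mult_assoc flip: int_pow_mult)
  then show ?thesis by (simp only: cc_conj_b_pow)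
qed

lemma cc_inv_b_pow_assoc:
  "y \<in> carrier G \<Longrightarrow> c [^] (-2::int) \<otimes> (b [^] (j::int) \<otimes> y) = b [^] (\<mu> * j) \<otimes> (c [^] (-2::int) \<otimes> y)"
  by (simp add: m_assoc [symmetric] cc_inv_b_pow)

lemma c4_inv_b_pow_assoc:
  "y \<in> carrier G \<Longrightarrow> c [^] (-4::int) \<otimes> (b [^] (j::int) \<otimes> y) = b [^] (\<mu> * \<mu> * j) \<otimes> (c [^] (-4::int) \<otimes> y)"
  using int_pow_mult [of c "-2" "-2"] by (simp add: m_assoc cc_inv_b_pow_assoc mult.assoc)

lemma c_conj_b_fourth: "(c \<otimes> b \<otimes> inv c) [^] (4::int) = b [^] ((-1 - \<mu>) * (1 + \<mu> * \<mu>))"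
proof -
  have v: "c \<otimes> b \<otimes> inv c = b [^] (-1::int) \<otimes> c [^] (-2::int)"
    using c_conj_b by (simp add: m_assoc inv_eq_int_pow int_pow_mult_assoc flip: int_pow_mult)
  have vv: "(c \<otimes> b \<otimes> inv c) [^] (2::int) = b [^] (-1 - \<mu>) \<otimes> c [^] (-4::int)"
    by (simp add: v int_pow_two m_assoc cc_inv_b_pow_assoc int_pow_mult_assoc flip: int_pow_mult)
  have "(c \<otimes> b \<otimes> inv c) [^] (4::int) = ((c \<otimes> b \<otimes> inv c) [^] (2::int)) [^] (2::int)"
    by (simp add: int_pow_pow)
  also have "\<dots> = b [^] (-1 - \<mu>) \<otimes> (c [^] (-4::int) \<otimes> (b [^] (-1 - \<mu>) \<otimes> c [^] (-4::int)))"
    by (simp only: vv int_pow_two [of "_ \<otimes> _"] int_pow_closed m_closed b_closed c_closed) (simp add: m_assoc)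
  also have "\<dots> = b [^] ((-1 - \<mu>) * (1 + \<mu> * \<mu>)) \<otimes> c [^] (-8::int)"
    by (simp add: c4_inv_b_pow_assoc int_pow_mult_assoc algebra_simps flip: int_pow_mult)
  also have "\<dots> = b [^] ((-1 - \<mu>) * (1 + \<mu> * \<mu>))"
    using c_period by (simp add: inv_int_pow [symmetric])
  finally show ?thesis .
qed

lemma c_conj_b_half: "c \<otimes> (b [^] (16 * e) \<otimes> inv c) = b [^] (16 * e)"
proof -
  have "c \<otimes> (b [^] (16 * e) \<otimes> inv c) = ((c \<otimes> b \<otimes> inv c) [^] (4::int)) [^] (4 * e)"
    using conj_int_pow' [of c b "16 * e"] by (simp add: m_assoc int_pow_pow)
  also have "\<dots> = b [^] ((-1 - \<mu>) * (1 + \<mu> * \<mu>) * (4 * e))"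
    by (simp add: c_conj_b_fourth int_pow_pow)
  also have "\<dots> = b [^] (16 * e)"
    by (rule int_pow_eq_if_period [OF b_closed b_period,
          where k = "-1 - 6 * \<epsilon> * e - 32 * \<epsilon>^2 * e^2 - 64 * \<epsilon>^3 * e^3"])
      (simp add: algebra_simps power2_eq_square power3_eq_cube)
  finally show ?thesis .
qed

lemma cc_conj_aa: "c [^] (2::int) \<otimes> (inv a \<otimes> (inv a \<otimes> c [^] (-2::int))) = inv a \<otimes> inv a"
proof -
  have zz: "b [^] (16 * e) \<otimes> (b [^] (16 * e) \<otimes> y) = y" if "y \<in> carrier G" for y
    using b_period that by (simp add: int_pow_mult_assoc)
  have "c [^] (2::int) \<otimes> (inv a \<otimes> (inv a \<otimes> c [^] (-2::int)))
      = c \<otimes> ((c \<otimes> (inv a \<otimes> (inv a \<otimes> inv c))) \<otimes> inv c)"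
    by (simp add: int_pow_two inv_eq_int_pow m_assoc flip: int_pow_mult)
  also have "\<dots> = c \<otimes> ((b [^] (16 * e) \<otimes> (inv a \<otimes> inv a)) \<otimes> inv c)"
    by (simp only: c_conj_aa)
  also have "\<dots> = (c \<otimes> (b [^] (16 * e) \<otimes> inv c)) \<otimes> (c \<otimes> (inv a \<otimes> (inv a \<otimes> inv c)))"
    by (simp add: m_assoc)
  also have "\<dots> = inv a \<otimes> inv a"
    by (simp only: c_conj_b_half c_conj_aa) (simp add: zz)
  finally show ?thesis .
qed

lemma conj_a_b_pow_mu: "(inv a \<otimes> (inv a \<otimes> inv b)) [^] \<mu> = b [^] (-(8 * \<epsilon> * e)) \<otimes> (inv a \<otimes> (inv a \<otimes> inv b))"
proof -
  let ?u = "inv a \<otimes> (inv a \<otimes> inv b)"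
  have "?u [^] \<mu> = (?u \<otimes> ?u) [^] (4 * \<epsilon> * e) \<otimes> ?u"
    using int_pow_odd [of ?u "4 * \<epsilon> * e"] by (simp add: algebra_simps)
  also have "\<dots> = b [^] (-(2 + 16 * e) * (4 * \<epsilon> * e)) \<otimes> ?u"
    by (simp add: conj_a_b_square int_pow_pow)
  also have "\<dots> = b [^] (-(8 * \<epsilon> * e)) \<otimes> ?u"
    using int_pow_eq_if_period [OF b_closed b_period, of "-(2 + 16 * e) * (4 * \<epsilon> * e)" "-(8 * \<epsilon> * e)" "-2 * \<epsilon> * e"]
    by (simp add: algebra_simps)
  finally show ?thesis .
qed

lemma cc_conj_inv_b_aa:
  "c [^] (2::int) \<otimes> (inv b \<otimes> (inv a \<otimes> (inv a \<otimes> c [^] (-2::int)))) = b [^] (-\<mu>) \<otimes> (inv a \<otimes> inv a)"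
proof -
  let ?W = "c [^] (2::int) \<otimes> (inv b \<otimes> (inv a \<otimes> (inv a \<otimes> c [^] (-2::int))))"
  have "b [^] \<mu> = c [^] (-2::int) \<otimes> (b \<otimes> c [^] (2::int))"
    using cc_conj_b_pow [of 1] by simp
  then have "inv a \<otimes> (b [^] \<mu> \<otimes> a)
      = (inv a \<otimes> (c [^] (-2::int) \<otimes> a)) \<otimes> ((inv a \<otimes> (b \<otimes> a)) \<otimes> (inv a \<otimes> (c [^] (2::int) \<otimes> a)))"
    by (simp add: m_assoc)
  also have "\<dots> = (b \<otimes> (c [^] (2::int) \<otimes> inv b)) \<otimes> ((inv a \<otimes> (inv a \<otimes> inv b)) \<otimes> (b \<otimes> (c [^] (-2::int) \<otimes> inv b)))"
    using conj_a_c_pow [of "-2"] conj_a_c_pow [of 2] conj_a_b_pow [of 1] by simp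
  finally have "b [^] (-(8 * \<epsilon> * e)) \<otimes> (inv a \<otimes> (inv a \<otimes> inv b)) = b \<otimes> (?W \<otimes> inv b)"
    using conj_a_b_pow [of \<mu>] conj_a_b_pow_mu by (simp add: m_assoc)
  then have "b [^] (-(8 * \<epsilon> * e)) \<otimes> (inv a \<otimes> inv a) = b \<otimes> ?W"
    by (simp add: m_assoc [symmetric])
  then have "?W = inv b \<otimes> (b [^] (-(8 * \<epsilon> * e)) \<otimes> (inv a \<otimes> inv a))"
    by (metis inv_solve_left m_closed int_pow_closed inv_closed a_closed b_closed c_closed)
  then show ?thesis by (simp add: inv_eq_int_pow int_pow_mult_assoc algebra_simps)
qed

lemma cc_conj_inv_b: "c [^] (2::int) \<otimes> (inv b \<otimes> c [^] (-2::int)) = b [^] (-\<mu>)"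
proof -
  have "(c [^] (2::int) \<otimes> (inv b \<otimes> c [^] (-2::int))) \<otimes> (inv a \<otimes> inv a)
      = c [^] (2::int) \<otimes> (inv b \<otimes> (c [^] (-2::int) \<otimes> (c [^] (2::int) \<otimes> (inv a \<otimes> (inv a \<otimes> c [^] (-2::int))))))"
    by (simp add: cc_conj_aa m_assoc)
  also have "\<dots> = b [^] (-\<mu>) \<otimes> (inv a \<otimes> inv a)"
    by (simp add: int_pow_mult_assoc cc_conj_inv_b_aa)
  finally show ?thesis by simp
qed

lemma b_pow_mu_square: "b [^] (\<mu> * \<mu> - 1) = \<one>"
proof -
  have "b [^] (-1::int) = c [^] (2::int) \<otimes> ((c [^] (-2::int) \<otimes> (b [^] (-1::int) \<otimes> c [^] (2::int))) \<otimes> c [^] (-2::int))"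
    by (simp add: m_assoc int_pow_mult_assoc flip: int_pow_mult)
  also have "\<dots> = (c [^] (2::int) \<otimes> (inv b \<otimes> c [^] (-2::int))) [^] \<mu>"
    using conj_int_pow' [of "c [^] (2::int)" "inv b" \<mu>]
    by (simp add: cc_conj_b_pow m_assoc inv_int_pow int_pow_inv int_pow_neg [symmetric] int_pow_pow)
  also have "\<dots> = b [^] (-(\<mu> * \<mu>))"
    by (simp only: cc_conj_inv_b int_pow_pow [OF b_closed] mult_minus_left)
  finally have inv_b: "b [^] (-1::int) = b [^] (-(\<mu> * \<mu>))" .
  have "b [^] (\<mu> * \<mu> - 1) = b [^] (\<mu> * \<mu>) \<otimes> b [^] (-1::int)"
    by (simp only: int_pow_mult [OF b_closed, symmetric] diff_conv_add_uminus)
  also have "\<dots> = \<one>"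
    by (simp only: inv_b int_pow_mult [OF b_closed, symmetric] add.right_inverse int_pow_0)
  finally show ?thesis .
qed

theorem b_half_power_trivial: "b [^] (16 * e) = \<one>"
proof -
  have "b [^] (16 * e) = b [^] (\<mu> * \<mu> - 1)"
    using sign
  proof
    assume "\<epsilon> = 1"
    then show ?thesis
      by (intro int_pow_eq_if_period [OF b_closed b_period, where k = "-2 * e"]) (simp add: algebra_simps)
  next
    assume "\<epsilon> = -1"
    then show ?thesis
      by (intro int_pow_eq_if_period [OF b_closed b_period, where k = "1 - 2 * e"]) (simp add: algebra_simps)
  qed
  then show ?thesis using b_pow_mu_square by simp
qed

end

lemma odd_invertible_mod_power_of_two:
  fixes k :: int
  assumes "odd k"
  obtains s t where "k * s = 1 + 2 ^ n * t"
proof -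
  have "coprime k (2 ^ n)" using assms by simp
  then obtain u v where "u * k + v * 2 ^ n = 1" by (metis bezout_int coprime_iff_gcd_eq_1)
  then have "k * u = 1 + 2 ^ n * (- v)" by (simp add: algebra_simps)
  then show ?thesis by (rule that)
qed

text \<open>Case (b): type {4, 2^\<beta>, 2^(\<beta>-1)} and the two relations for \<sigma>3^-1 \<sigma>2 and \<sigma>3 \<sigma>2^-1.\<close>

locale relations_type_half = twisted_rotation_triple +
  fixes \<epsilon> :: int and n :: nat
  assumes e_power: "e = 2 ^ n"
    and sign: "\<epsilon> = 1 \<or> \<epsilon> = -1"
    and c_period: "c [^] (16 * e) = \<one>"
    and inv_c_b: "inv c \<otimes> b = b [^] (3 + \<epsilon> * (8 * e)) \<otimes> c [^] (1 - 8 * e)"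
    and c_inv_b: "c \<otimes> inv b = b [^] (-3 + \<epsilon> * (8 * e)) \<otimes> c [^] (-1 + 8 * e)"
begin

abbreviation "\<kappa> \<equiv> 3 + \<epsilon> * (8 * e)"

abbreviation "f \<equiv> c [^] (8 * e)"

lemma f_involution: "f \<otimes> f = \<one>"
  using c_period by (simp flip: int_pow_mult)

lemma inv_f: "inv f = c [^] (1 - 8 * e) \<otimes> inv c"
proof -
  have "c [^] (1 - 8 * e) \<otimes> inv c = c [^] (-(8 * e))"
    by (simp add: inv_eq_int_pow flip: int_pow_mult)
  then show ?thesis by (simp add: inv_int_pow)
qed

lemma inv_f_self: "inv f = f"
  by (rule inv_equality [OF f_involution]) auto

lemma inv_c_b_inv_c: "inv c \<otimes> b \<otimes> inv c = b [^] \<kappa> \<otimes> f"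
proof -
  have "inv c \<otimes> b \<otimes> inv c = b [^] \<kappa> \<otimes> (c [^] (1 - 8 * e) \<otimes> inv c)"
    by (simp add: inv_c_b m_assoc)
  then show ?thesis by (simp only: inv_f [symmetric] inv_f_self)
qed

lemma f_conj_b_pow_kappa: "f \<otimes> b [^] \<kappa> \<otimes> inv f = b [^] (3 - \<epsilon> * (8 * e))"
proof -
  have b1: "b = c \<otimes> (b [^] \<kappa> \<otimes> c [^] (1 - 8 * e))"
    using inv_c_b by (metis inv_solve_left' m_closed int_pow_closed b_closed c_closed)
  have "inv (c \<otimes> inv b) = inv (b [^] (-3 + \<epsilon> * (8 * e)) \<otimes> c [^] (-1 + 8 * e))"
    by (simp only: c_inv_b)
  then have "b \<otimes> inv c = c [^] (1 - 8 * e) \<otimes> b [^] (3 - \<epsilon> * (8 * e))"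
    by (simp add: inv_mult_group inv_int_pow algebra_simps)
  then have b2: "b = c [^] (1 - 8 * e) \<otimes> (b [^] (3 - \<epsilon> * (8 * e)) \<otimes> c)"
    by (metis inv_solve_right' m_assoc m_closed int_pow_closed b_closed c_closed)
  have "f \<otimes> b [^] \<kappa> \<otimes> inv f = c [^] (-(1 - 8 * e)) \<otimes> ((c \<otimes> (b [^] \<kappa> \<otimes> c [^] (1 - 8 * e))) \<otimes> inv c)"
  proof -
    have "f = c [^] (-(1 - 8 * e)) \<otimes> c" using int_pow_mult [of c "-(1 - 8 * e)" 1] by simp
    then show ?thesis unfolding inv_f by (simp only:) (simp add: m_assoc)
  qed
  also have "\<dots> = c [^] (-(1 - 8 * e)) \<otimes> ((c [^] (1 - 8 * e) \<otimes> (b [^] (3 - \<epsilon> * (8 * e)) \<otimes> c)) \<otimes> inv c)"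
    using b1 b2 by simp
  also have "\<dots> = b [^] (3 - \<epsilon> * (8 * e))"
    by (simp add: m_assoc int_pow_mult_assoc)
  finally show ?thesis .
qed

lemma f_conj_b: "f \<otimes> b \<otimes> inv f = b [^] (1 + 16 * e)"
proof -
  have "odd \<kappa>" by simp
  then obtain s t where st: "\<kappa> * s = 1 + 2 ^ (n + 5) * t"
    by (rule odd_invertible_mod_power_of_two)
  then have "odd (\<kappa> * s)" by simp
  then have "odd s" by simp
  then obtain w where w: "s = 2 * w + 1" by (rule oddE)
  have period: "2 ^ (n + 5) = 32 * e" by (simp add: e_power power_add)
  have "b = b [^] (\<kappa> * s)"
    using int_pow_eq_if_period [OF b_closed b_period, of "\<kappa> * s" 1 t] st period by simp
  then have "f \<otimes> b \<otimes> inv f = (f \<otimes> b [^] \<kappa> \<otimes> inv f) [^] s"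
    using conj_int_pow' [of f "b [^] \<kappa>" s] by (simp add: int_pow_pow)
  also have "\<dots> = b [^] ((3 - \<epsilon> * (8 * e)) * s)"
    by (simp add: f_conj_b_pow_kappa int_pow_pow)
  also have "\<dots> = b [^] (1 + 16 * e)"
    using sign
  proof
    assume "\<epsilon> = 1"
    then show ?thesis using st period
      by (intro int_pow_eq_if_period [OF b_closed b_period, where k = "t - w - 1"]) (simp add: w algebra_simps)
  next
    assume "\<epsilon> = -1"
    then show ?thesis using st period
      by (intro int_pow_eq_if_period [OF b_closed b_period, where k = "t + w"]) (simp add: w algebra_simps)
  qed
  finally show ?thesis .
qed

lemma f_b_pow: "f \<otimes> b [^] (j::int) = b [^] ((1 + 16 * e) * j) \<otimes> f"
proof -
  have "f \<otimes> b [^] j \<otimes> inv f = b [^] ((1 + 16 * e) * j)"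
    using conj_int_pow' [of f b j] by (simp add: f_conj_b int_pow_pow)
  then show ?thesis by (metis inv_solve_right' m_closed int_pow_closed b_closed c_closed)
qed

lemma f_b_pow_assoc: "y \<in> carrier G \<Longrightarrow> f \<otimes> (b [^] (j::int) \<otimes> y) = b [^] ((1 + 16 * e) * j) \<otimes> (f \<otimes> y)"
  by (simp add: m_assoc [symmetric] f_b_pow)

lemma conj_c_b_fourth: "(inv c \<otimes> b \<otimes> c) [^] (4::int) = b [^] ((\<kappa> - 1 - 16 * e) * (2 + 16 * e))"
proof -
  have "(inv c \<otimes> b \<otimes> c) [^] (2::int) = (inv c \<otimes> b \<otimes> inv c) \<otimes> (c \<otimes> (b \<otimes> c))"
    by (simp add: int_pow_two m_assoc)
  also have "\<dots> = b [^] \<kappa> \<otimes> (f \<otimes> b [^] (-1::int))"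
    by (simp only: inv_c_b_inv_c cbc) (simp add: m_assoc inv_eq_int_pow)
  also have "\<dots> = b [^] (\<kappa> - 1 - 16 * e) \<otimes> f"
    by (simp add: f_b_pow int_pow_mult_assoc) (simp add: algebra_simps)
  finally have sq: "(inv c \<otimes> b \<otimes> c) [^] (2::int) = b [^] (\<kappa> - 1 - 16 * e) \<otimes> f" .
  have "b [^] (\<kappa> - 1 - 16 * e) \<otimes> f \<otimes> (b [^] (\<kappa> - 1 - 16 * e) \<otimes> f)
      = b [^] ((\<kappa> - 1 - 16 * e) * (2 + 16 * e))"
    using f_involution by (simp add: m_assoc f_b_pow_assoc flip: int_pow_mult) (simp add: algebra_simps)
  then have "(b [^] (\<kappa> - 1 - 16 * e) \<otimes> f) [^] (2::int) = b [^] ((\<kappa> - 1 - 16 * e) * (2 + 16 * e))"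
    by (simp only: int_pow_two m_closed int_pow_closed b_closed c_closed)
  moreover have "(inv c \<otimes> b \<otimes> c) [^] (4::int) = ((inv c \<otimes> b \<otimes> c) [^] (2::int)) [^] (2::int)"
    by (simp add: int_pow_pow)
  ultimately show ?thesis by (simp only: sq)
qed

lemma c_commutes_b_half: "c \<otimes> b [^] (16 * e) = b [^] (16 * e) \<otimes> c"
proof -
  have "inv c \<otimes> b [^] (16 * e) \<otimes> c = ((inv c \<otimes> b \<otimes> c) [^] (4::int)) [^] (4 * e)"
    using conj_int_pow [of c b "16 * e"] by (simp add: int_pow_pow)
  also have "\<dots> = b [^] ((\<kappa> - 1 - 16 * e) * (2 + 16 * e) * (4 * e))"
    by (simp add: conj_c_b_fourth int_pow_pow)
  also have "\<dots> = b [^] (16 * e)"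
    by (rule int_pow_eq_if_period [OF b_closed b_period, where k = "2 * \<epsilon> * e + 16 * \<epsilon> * e^2 - 32 * e^2"])
      (simp add: algebra_simps power2_eq_square)
  finally have "c \<otimes> (inv c \<otimes> b [^] (16 * e) \<otimes> c) = c \<otimes> b [^] (16 * e)" by simp
  then show ?thesis by (simp add: m_assoc)
qed

lemma conj_a_b_pow_kappa:
  "(inv a \<otimes> (inv a \<otimes> inv b)) [^] \<kappa> = b [^] (-2 - 8 * \<epsilon> * e - 16 * e) \<otimes> (inv a \<otimes> (inv a \<otimes> inv b))"
proof -
  let ?u = "inv a \<otimes> (inv a \<otimes> inv b)"
  have "?u [^] \<kappa> = (?u \<otimes> ?u) [^] (1 + 4 * \<epsilon> * e) \<otimes> ?u"
    using int_pow_odd [of ?u "1 + 4 * \<epsilon> * e"] by (simp add: algebra_simps)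
  also have "\<dots> = b [^] (-(2 + 16 * e) * (1 + 4 * \<epsilon> * e)) \<otimes> ?u"
    by (simp add: conj_a_b_square int_pow_pow)
  also have "\<dots> = b [^] (-2 - 8 * \<epsilon> * e - 16 * e) \<otimes> ?u"
    using int_pow_eq_if_period [OF b_closed b_period, of "-(2 + 16 * e) * (1 + 4 * \<epsilon> * e)"
        "-2 - 8 * \<epsilon> * e - 16 * e" "-2 * \<epsilon> * e"]
    by (simp add: algebra_simps)
  finally show ?thesis .
qed

lemma conj_a_inv_c_b:
  "b \<otimes> (c \<otimes> (inv b \<otimes> (inv a \<otimes> inv a))) = b [^] (-2 - 8 * \<epsilon> * e - 16 * e) \<otimes> (inv a \<otimes> (inv a \<otimes> c [^] (8 * e - 1)))"
proof -
  let ?u = "inv a \<otimes> (inv a \<otimes> inv b)" and ?X = "-2 - 8 * \<epsilon> * e - 16 * e"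
  have "inv a \<otimes> ((inv c \<otimes> b) \<otimes> a) = (inv a \<otimes> (c [^] (-1::int) \<otimes> a)) \<otimes> (inv a \<otimes> (b \<otimes> a))"
    by (simp add: m_assoc int_pow_neg)
  also have "\<dots> = b \<otimes> (c \<otimes> (inv b \<otimes> ?u))"
    using conj_a_c_pow [of "-1"] conj_a_b_pow [of 1] by (simp add: m_assoc)
  finally have lhs: "inv a \<otimes> ((inv c \<otimes> b) \<otimes> a) = b \<otimes> (c \<otimes> (inv b \<otimes> ?u))" .
  have "inv a \<otimes> ((b [^] \<kappa> \<otimes> c [^] (1 - 8 * e)) \<otimes> a) = (inv a \<otimes> (b [^] \<kappa> \<otimes> a)) \<otimes> (inv a \<otimes> (c [^] (1 - 8 * e) \<otimes> a))"
    by (simp add: m_assoc)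
  also have "\<dots> = (b [^] ?X \<otimes> ?u) \<otimes> (b \<otimes> (c [^] (8 * e - 1) \<otimes> inv b))"
    using conj_a_b_pow [of \<kappa>] conj_a_c_pow [of "1 - 8 * e"] conj_a_b_pow_kappa by simp
  finally have rhs: "inv a \<otimes> ((b [^] \<kappa> \<otimes> c [^] (1 - 8 * e)) \<otimes> a) = (b [^] ?X \<otimes> ?u) \<otimes> (b \<otimes> (c [^] (8 * e - 1) \<otimes> inv b))" .
  have "(b \<otimes> (c \<otimes> (inv b \<otimes> (inv a \<otimes> inv a)))) \<otimes> inv b = (b [^] ?X \<otimes> (inv a \<otimes> (inv a \<otimes> c [^] (8 * e - 1)))) \<otimes> inv b"
    using lhs rhs inv_c_b by (simp add: m_assoc)
  then show ?thesis by simp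
qed

lemma aa_c_pow_twist: "inv a \<otimes> inv a \<otimes> c [^] (8 * e - 1) = b [^] (16 * e) \<otimes> c [^] (8 * e - 1) \<otimes> (inv a \<otimes> inv a)"
proof -
  let ?x = "inv a \<otimes> inv a" and ?z = "b [^] (16 * e)"
  have zz: "?z \<otimes> ?z = \<one>" using b_period by (simp flip: int_pow_mult)
  have "c \<otimes> ?x = ?z \<otimes> ?x \<otimes> c"
    using c_conj_aa by (metis inv_solve_right' m_assoc m_closed inv_closed int_pow_closed a_closed b_closed c_closed)
  then have "?z \<otimes> (c \<otimes> ?x) = (?z \<otimes> ?z) \<otimes> (?x \<otimes> c)" by (simp add: m_assoc)
  then have xc: "?x \<otimes> c = ?z \<otimes> c \<otimes> ?x" using zz by (simp add: m_assoc)
  obtain N :: nat where N: "8 * e - 1 = int N"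
    using nonneg_int_cases [of "8 * e - 1"] by (auto simp: e_power)
  have "?z [^] (8 * e - 1) = ?z"
    using int_pow_odd [of ?z "4 * e - 1"] zz by (simp add: algebra_simps)
  then show ?thesis
    using commute_nat_pow_twisted [of ?x c ?z N, OF _ _ _ xc c_commutes_b_half [symmetric]]
    by (simp add: N int_pow_int)
qed

theorem b_half_power_trivial: "b [^] (16 * e) = \<one>"
proof -
  let ?X = "-2 - 8 * \<epsilon> * e - 16 * e" and ?x = "inv a \<otimes> inv a"
  have "(b \<otimes> (c \<otimes> inv b)) \<otimes> ?x = (b [^] ?X \<otimes> (b [^] (16 * e) \<otimes> c [^] (8 * e - 1))) \<otimes> ?x"
    using conj_a_inv_c_b aa_c_pow_twist by (simp add: m_assoc)
  then have "b \<otimes> (c \<otimes> inv b) = b [^] ?X \<otimes> (b [^] (16 * e) \<otimes> c [^] (8 * e - 1))" by simp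
  then have "c \<otimes> inv b = inv b \<otimes> (b [^] ?X \<otimes> (b [^] (16 * e) \<otimes> c [^] (8 * e - 1)))"
    by (metis inv_cancel_left' m_closed inv_closed b_closed c_closed)
  also have "\<dots> = b [^] (-3 - 8 * \<epsilon> * e) \<otimes> c [^] (8 * e - 1)"
    by (simp add: inv_eq_int_pow int_pow_mult_assoc)
  finally have "c \<otimes> inv b = b [^] (-3 - 8 * \<epsilon> * e) \<otimes> c [^] (8 * e - 1)" .
  then have "b [^] (-3 - 8 * \<epsilon> * e) = b [^] (-3 + \<epsilon> * (8 * e))"
    using c_inv_b by (simp add: algebra_simps)
  then have "b [^] (16 * \<epsilon> * e) = \<one>"
    by (simp add: int_pow_eq int_pow_eq_id algebra_simps)
  then show ?thesis
    using sign by (auto simp: int_pow_neg)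
qed

end

lemma aut_bij: "polytope_aut P leq \<sigma> \<Longrightarrow> bij_betw \<sigma> P P"
  by (simp add: polytope_aut_def Bij_def)
lemma aut_mem: "polytope_aut P leq \<sigma> \<Longrightarrow> x \<in> P \<Longrightarrow> \<sigma> x \<in> P"
  using aut_bij bij_betwE by blast
lemma aut_inj: "polytope_aut P leq \<sigma> \<Longrightarrow> inj_on \<sigma> P"
  using aut_bij bij_betw_def by blast
lemma aut_leq: "polytope_aut P leq \<sigma> \<Longrightarrow> x \<in> P \<Longrightarrow> y \<in> P \<Longrightarrow> leq (\<sigma> x) (\<sigma> y) \<longleftrightarrow> leq x y"
  by (simp add: polytope_aut_def)

lemma BijGroup_mult: "\<sigma> \<in> Bij P \<Longrightarrow> \<tau> \<in> Bij P \<Longrightarrow> \<sigma> \<otimes>\<^bsub>BijGroup P\<^esub> \<tau> = compose P \<sigma> \<tau>"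
  by (simp add: BijGroup_def)
lemma BijGroup_one: "\<one>\<^bsub>BijGroup P\<^esub> = (\<lambda>x\<in>P. x)" by (simp add: BijGroup_def)
lemma BijGroup_carrier: "carrier (BijGroup P) = Bij P" by (simp add: BijGroup_def)

lemma BijGroup_mult_image: assumes "\<sigma> \<in> Bij P" "\<tau> \<in> Bij P" "X \<subseteq> P"
  shows "(\<sigma> \<otimes>\<^bsub>BijGroup P\<^esub> \<tau>) ` X = \<sigma> ` (\<tau> ` X)"
proof -
  have "\<And>x. x \<in> X \<Longrightarrow> compose P \<sigma> \<tau> x = \<sigma> (\<tau> x)" using assms by (auto simp: compose_def)
  then show ?thesis using assms by (simp add: BijGroup_mult image_image cong: image_cong)
qed

lemma BijGroup_one_eqI: assumes "\<sigma> \<in> Bij P" "\<And>x. x \<in> P \<Longrightarrow> \<sigma> x = x" shows "\<sigma> = \<one>\<^bsub>BijGroup P\<^esub>"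
proof -
  have "\<sigma> \<in> extensional P" using assms Bij_imp_extensional by blast
  then show ?thesis using assms unfolding BijGroup_one by (auto simp: extensional_def)
qed

lemma aut_mult: assumes "polytope_aut P leq \<sigma>" "polytope_aut P leq \<tau>"
  shows "polytope_aut P leq (\<sigma> \<otimes>\<^bsub>BijGroup P\<^esub> \<tau>)"
proof -
  have B: "\<sigma> \<in> Bij P" "\<tau> \<in> Bij P" using assms by (auto simp: polytope_aut_def)
  have "compose P \<sigma> \<tau> \<in> Bij P" using compose_Bij B by blast
  moreover have "\<forall>x\<in>P. \<forall>y\<in>P. leq x y \<longleftrightarrow> leq (compose P \<sigma> \<tau> x) (compose P \<sigma> \<tau> y)"
    using assms aut_mem[OF assms(2)] by (auto simp: compose_def aut_leq)
  ultimately show ?thesis using B by (simp add: polytope_aut_def BijGroup_mult)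
qed

lemma aut_one: "polytope_aut P leq \<one>\<^bsub>BijGroup P\<^esub>"
  by (simp add: polytope_aut_def BijGroup_one id_Bij)

lemma aut_inv: assumes A: "polytope_aut P leq \<sigma>" shows "polytope_aut P leq (inv\<^bsub>BijGroup P\<^esub> \<sigma>)"
proof -
  have B: "\<sigma> \<in> Bij P" using A by (simp add: polytope_aut_def)
  have bb: "bij_betw \<sigma> P P" using aut_bij[OF A] .
  have inv: "inv\<^bsub>BijGroup P\<^esub> \<sigma> = (\<lambda>x\<in>P. inv_into P \<sigma> x)" using inv_BijGroup[OF B] .
  have "\<forall>x\<in>P. \<forall>y\<in>P. leq x y \<longleftrightarrow> leq (inv_into P \<sigma> x) (inv_into P \<sigma> y)"
  proof (intro ballI)
    fix x y assume x: "x \<in> P" and y: "y \<in> P"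
    have "inv_into P \<sigma> x \<in> P" "inv_into P \<sigma> y \<in> P" using Bij_inv_into_mem[OF B x] Bij_inv_into_mem[OF B y] by auto
    moreover have "\<sigma> (inv_into P \<sigma> x) = x" "\<sigma> (inv_into P \<sigma> y) = y" using bb x y by (auto simp: bij_betw_inv_into_right)
    ultimately show "leq x y \<longleftrightarrow> leq (inv_into P \<sigma> x) (inv_into P \<sigma> y)" using aut_leq[OF A] by metis
  qed
  then show ?thesis using restrict_inv_into_Bij[OF B] inv by (simp add: polytope_aut_def)
qed

lemma aut_carrier: "polytope_aut P leq \<sigma> \<Longrightarrow> \<sigma> \<in> carrier (BijGroup P)"
  by (simp add: polytope_aut_def BijGroup_carrier)

lemma aut_subgroup: "subgroup {\<sigma>. polytope_aut P leq \<sigma>} (BijGroup P)"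
  unfolding subgroup_def using aut_carrier aut_one aut_mult aut_inv by blast

lemma aut_pow: "polytope_aut P leq \<sigma> \<Longrightarrow> polytope_aut P leq (\<sigma> [^]\<^bsub>BijGroup P\<^esub> (k::int))"
  using group.subgroup_int_pow_closed [OF group_BijGroup aut_subgroup, where h = \<sigma> and k = k] by simp

lemma aut_pow_nat: "polytope_aut P leq \<sigma> \<Longrightarrow> polytope_aut P leq (\<sigma> [^]\<^bsub>BijGroup P\<^esub> (k::nat))"
  using aut_pow[where \<sigma>=\<sigma> and k="int k"] by (simp add: int_pow_int)

lemma BijGroup_one_image: "X \<subseteq> P \<Longrightarrow> \<one>\<^bsub>BijGroup P\<^esub> ` X = X"
  by (auto simp: BijGroup_one)

lemma aut_image_mult:
  "polytope_aut P leq x \<Longrightarrow> polytope_aut P leq y \<Longrightarrow> X \<subseteq> P \<Longrightarrow> (x \<otimes>\<^bsub>BijGroup P\<^esub> y) ` X = x ` y ` X"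
  by (rule BijGroup_mult_image) (auto simp: polytope_aut_def)

section \<open>Abstract polytopes of rank 4\<close>

locale polytope4 =
  fixes P :: "'a set" and leq :: "'a \<Rightarrow> 'a \<Rightarrow> bool"
  assumes abstract_polytope: "abstract_polytope4 P leq"
begin

abbreviation "flag \<equiv> is_flag P leq"

lemma leq_refl: "x \<in> P \<Longrightarrow> leq x x" using abstract_polytope unfolding abstract_polytope4_def by blast
lemma leq_antisym: "x \<in> P \<Longrightarrow> y \<in> P \<Longrightarrow> leq x y \<Longrightarrow> leq y x \<Longrightarrow> x = y"
  using abstract_polytope unfolding abstract_polytope4_def by blast
lemma leq_trans: "x \<in> P \<Longrightarrow> y \<in> P \<Longrightarrow> z \<in> P \<Longrightarrow> leq x y \<Longrightarrow> leq y z \<Longrightarrow> leq x z"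
  using abstract_polytope unfolding abstract_polytope4_def by blast
lemma has_least_face: "\<exists>m\<in>P. \<forall>x\<in>P. leq m x" using abstract_polytope unfolding abstract_polytope4_def by blast
lemma has_greatest_face: "\<exists>M\<in>P. \<forall>x\<in>P. leq x M" using abstract_polytope unfolding abstract_polytope4_def by blast
lemma flag_card: "flag \<Phi> \<Longrightarrow> finite \<Phi> \<and> card \<Phi> = 6" using abstract_polytope unfolding abstract_polytope4_def by blast
lemma diamond: "face_rank P leq F (j - 1) \<Longrightarrow> face_rank P leq G (j + 1) \<Longrightarrow> leq F G \<Longrightarrow>
        card {H\<in>P. H \<noteq> F \<and> H \<noteq> G \<and> leq F H \<and> leq H G} = 2"
  using abstract_polytope unfolding abstract_polytope4_def by blast
lemma strong_flag_connectivity: "flag \<Phi> \<Longrightarrow> flag \<Psi> \<Longrightarrow>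
        (\<lambda>A B. flag A \<and> flag B \<and> adjacent_flags A B \<and> \<Phi> \<inter> \<Psi> \<subseteq> A \<and> \<Phi> \<inter> \<Psi> \<subseteq> B)\<^sup>*\<^sup>* \<Phi> \<Psi>"
  using abstract_polytope unfolding abstract_polytope4_def by blast

lemma flag_chain: "flag \<Phi> \<Longrightarrow> po_chain P leq \<Phi>" by (simp add: is_flag_def)
lemma flag_subset: "flag \<Phi> \<Longrightarrow> \<Phi> \<subseteq> P" by (simp add: is_flag_def po_chain_def)
lemma flag_comparable: "flag \<Phi> \<Longrightarrow> x \<in> \<Phi> \<Longrightarrow> y \<in> \<Phi> \<Longrightarrow> leq x y \<or> leq y x"
  by (simp add: is_flag_def po_chain_def)
lemma flag_maximal: "flag \<Phi> \<Longrightarrow> x \<in> P \<Longrightarrow> po_chain P leq (insert x \<Phi>) \<Longrightarrow> x \<in> \<Phi>"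
  by (simp add: is_flag_def)

lemma chain_extends_to_flag: assumes C: "po_chain P leq C" shows "\<exists>\<Phi>. flag \<Phi> \<and> C \<subseteq> \<Phi>"
proof -
  let ?A = "{D. po_chain P leq D \<and> C \<subseteq> D}"
  have "\<forall>Z\<in>chains ?A. \<exists>U\<in>?A. \<forall>X\<in>Z. X \<subseteq> U"
  proof
    fix Z assume Z: "Z \<in> chains ?A"
    show "\<exists>U\<in>?A. \<forall>X\<in>Z. X \<subseteq> U"
    proof (cases "Z = {}")
      case True then show ?thesis using C by blast
    next
      case False
      have "\<Union>Z \<in> ?A"
      proof -
        have sub: "\<Union>Z \<subseteq> P" using chainsD2[OF Z] by (auto simp: po_chain_def)
        have "\<forall>x\<in>\<Union>Z. \<forall>y\<in>\<Union>Z. leq x y \<or> leq y x"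
        proof (intro ballI)
          fix x y assume "x \<in> \<Union>Z" "y \<in> \<Union>Z"
          then obtain X Y where XY: "X \<in> Z" "Y \<in> Z" "x \<in> X" "y \<in> Y" by blast
          then have "X \<subseteq> Y \<or> Y \<subseteq> X" using chainsD[OF Z] by blast
          moreover have "po_chain P leq X" "po_chain P leq Y" using XY chainsD2[OF Z] by auto
          ultimately show "leq x y \<or> leq y x" using XY unfolding po_chain_def by blast
        qed
        moreover have "C \<subseteq> \<Union>Z" using False chainsD2[OF Z] by auto
        ultimately show ?thesis using sub by (simp add: po_chain_def)
      qed
      then show ?thesis by blast
    qed
  qed
  from Zorn_Lemma2[OF this] obtain M where M: "M \<in> ?A" and Mmax: "\<forall>X\<in>?A. M \<subseteq> X \<longrightarrow> X = M" by blast
  have "flag M"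
    unfolding is_flag_def
  proof (intro conjI ballI impI)
    show "po_chain P leq M" using M by simp
    fix x assume x: "x \<in> P" and ch: "po_chain P leq (insert x M)"
    then have "insert x M \<in> ?A" using M by auto
    then have "insert x M = M" using Mmax by blast
    then show "x \<in> M" by blast
  qed
  then show ?thesis using M by blast
qed

lemma chain_finite_card_le: assumes "po_chain P leq C" shows "finite C \<and> card C \<le> 6"
proof -
  obtain \<Phi> where "flag \<Phi>" "C \<subseteq> \<Phi>" using chain_extends_to_flag[OF assms] by blast
  then show ?thesis using flag_card by (metis card_mono finite_subset)
qed

lemma chain_card_6_is_flag: assumes C: "po_chain P leq C" and c6: "card C = 6" shows "flag C"
  unfolding is_flag_def
proof (intro conjI ballI impI)
  show "po_chain P leq C" by fact
  fix x assume x: "x \<in> P" and ch: "po_chain P leq (insert x C)"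
  show "x \<in> C"
  proof (rule ccontr)
    assume "x \<notin> C"
    then have "card (insert x C) = 7" using chain_finite_card_le[OF C] c6 by simp
    then show False using chain_finite_card_le[OF ch] by simp
  qed
qed

lemma singleton_chain: "x \<in> P \<Longrightarrow> po_chain P leq {x}"
  by (simp add: po_chain_def leq_refl)

lemma face_in_some_flag: "x \<in> P \<Longrightarrow> \<exists>\<Phi>. flag \<Phi> \<and> x \<in> \<Phi>"
  using chain_extends_to_flag[OF singleton_chain] by blast

definition below :: "'a set \<Rightarrow> 'a \<Rightarrow> 'a set" where
  "below \<Phi> x = {G\<in>\<Phi>. G \<noteq> x \<and> leq G x}"

definition above :: "'a set \<Rightarrow> 'a \<Rightarrow> 'a set" where
  "above \<Phi> x = {G\<in>\<Phi>. G \<noteq> x \<and> leq x G}"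

lemma card_below_above:
  assumes "A \<subseteq> P" "B \<subseteq> P" "finite A" "finite B" "x \<in> P"
  shows "card (insert x (below A x) \<union> above B x) = card (below A x) + 1 + card (above B x)"
proof -
  have "insert x (below A x) \<inter> above B x = {}"
    using assms leq_antisym by (auto simp: below_def above_def)
  moreover have "x \<notin> below A x" "finite (below A x)" "finite (above B x)"
    using assms by (simp_all add: below_def above_def)
  ultimately show ?thesis by (simp add: card_Un_disjoint)
qed

lemma flag_below_above: "flag \<Psi> \<Longrightarrow> x \<in> \<Psi> \<Longrightarrow> \<Psi> = insert x (below \<Psi> x) \<union> above \<Psi> x"
  using flag_comparable by (auto simp: below_def above_def)

lemma chain_below_above:
  assumes F: "flag \<Phi>" and G: "flag \<Psi>" and x: "x \<in> \<Phi>" "x \<in> \<Psi>"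
  shows "po_chain P leq (insert x (below \<Phi> x) \<union> above \<Psi> x)"
  unfolding po_chain_def
proof (intro conjI ballI)
  have sP: "\<Phi> \<subseteq> P" "\<Psi> \<subseteq> P" using F G flag_subset by auto
  then show "insert x (below \<Phi> x) \<union> above \<Psi> x \<subseteq> P" using x by (auto simp: below_def above_def)
  have "leq p q" if "p \<in> insert x (below \<Phi> x)" "q \<in> above \<Psi> x" for p q
    using that leq_trans [of p x q] leq_refl sP x by (auto simp: below_def above_def)
  moreover have "leq p q \<or> leq q p" if "p \<in> insert x (below \<Phi> x)" "q \<in> insert x (below \<Phi> x)" for p q
    using that flag_comparable [OF F] x by (auto simp: below_def)
  moreover have "leq p q \<or> leq q p" if "p \<in> above \<Psi> x" "q \<in> above \<Psi> x" for p q
    using that flag_comparable [OF G] by (auto simp: above_def)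
  ultimately show "leq u v \<or> leq v u" if "u \<in> insert x (below \<Phi> x) \<union> above \<Psi> x"
    and "v \<in> insert x (below \<Phi> x) \<union> above \<Psi> x" for u v
    using that by blast
qed

lemma card_below_le:
  assumes F: "flag \<Phi>" and G: "flag \<Psi>" and x: "x \<in> \<Phi>" "x \<in> \<Psi>"
  shows "card (below \<Phi> x) \<le> card (below \<Psi> x)"
proof -
  have sP: "\<Phi> \<subseteq> P" "\<Psi> \<subseteq> P" "x \<in> P" using F G x flag_subset by auto
  have fin: "finite \<Phi>" "finite \<Psi>" using F G flag_card by auto
  have "card (below \<Phi> x) + 1 + card (above \<Psi> x) \<le> 6"
    using chain_finite_card_le [OF chain_below_above [OF F G x]] card_below_above [OF sP(1,2) fin sP(3)] by simp
  moreover have "card (below \<Psi> x) + 1 + card (above \<Psi> x) = 6"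
    using flag_card [OF G] flag_below_above [OF G x(2)] card_below_above [OF sP(2,2) fin(2,2) sP(3)] by simp
  ultimately show ?thesis by simp
qed

lemma card_below_eq: "flag \<Phi> \<Longrightarrow> flag \<Psi> \<Longrightarrow> x \<in> \<Phi> \<Longrightarrow> x \<in> \<Psi> \<Longrightarrow> card (below \<Phi> x) = card (below \<Psi> x)"
  using card_below_le by (meson le_antisym)

text \<open>The choice of flag is irrelevant by card_below_eq.\<close>

definition rank :: "'a \<Rightarrow> int" where
  "rank x = int (card (below (SOME \<Phi>. flag \<Phi> \<and> x \<in> \<Phi>) x)) - 1"

lemma rank_in_flag: assumes F: "flag \<Phi>" and x: "x \<in> \<Phi>" shows "rank x = int (card (below \<Phi> x)) - 1"
proof -
  have "\<exists>\<Phi>. flag \<Phi> \<and> x \<in> \<Phi>" using F x by blast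
  then have "flag (SOME \<Phi>. flag \<Phi> \<and> x \<in> \<Phi>) \<and> x \<in> (SOME \<Phi>. flag \<Phi> \<and> x \<in> \<Phi>)" by (rule someI_ex)
  then show ?thesis unfolding rank_def using card_below_eq F x by metis
qed

lemma face_rank_iff: "face_rank P leq x j \<longleftrightarrow> x \<in> P \<and> rank x = j"
proof
  assume "face_rank P leq x j"
  then obtain \<Phi> where "x \<in> P" "flag \<Phi>" "x \<in> \<Phi>" "int (card {G\<in>\<Phi>. G \<noteq> x \<and> leq G x}) - 1 = j"
    unfolding face_rank_def by blast
  then show "x \<in> P \<and> rank x = j" using rank_in_flag by (simp add: below_def)
next
  assume "x \<in> P \<and> rank x = j"
  then obtain \<Phi> where "flag \<Phi>" "x \<in> \<Phi>" "x \<in> P" "rank x = j" using face_in_some_flag by blast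
  then show "face_rank P leq x j" unfolding face_rank_def using rank_in_flag by (auto simp: below_def)
qed

lemma rank_mono_in_flag: assumes F: "flag \<Phi>" and xy: "x \<in> \<Phi>" "y \<in> \<Phi>" "leq x y" "x \<noteq> y"
  shows "rank x < rank y"
proof -
  have sP: "\<Phi> \<subseteq> P" using F flag_subset by auto
  have fin: "finite \<Phi>" using F flag_card by auto
  have "below \<Phi> x \<subseteq> below \<Phi> y" using xy sP by (auto simp: below_def intro: leq_trans dest: leq_antisym)
  moreover have "x \<in> below \<Phi> y" "x \<notin> below \<Phi> x" using xy by (auto simp: below_def)
  ultimately have "below \<Phi> x \<subset> below \<Phi> y" by blast
  then have "card (below \<Phi> x) < card (below \<Phi> y)" using fin by (intro psubset_card_mono) (auto simp: below_def)
  then show ?thesis using rank_in_flag[OF F] xy by simp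
qed

lemma rank_mono: assumes xy: "x \<in> P" "y \<in> P" "leq x y" "x \<noteq> y" shows "rank x < rank y"
proof -
  have "po_chain P leq {x, y}" using xy leq_refl by (auto simp: po_chain_def)
  then obtain \<Phi> where "flag \<Phi>" "{x, y} \<subseteq> \<Phi>" using chain_extends_to_flag by blast
  then show ?thesis using rank_mono_in_flag xy by auto
qed

lemma rank_inj_in_flag: assumes F: "flag \<Phi>" and xy: "x \<in> \<Phi>" "y \<in> \<Phi>" "rank x = rank y" shows "x = y"
  using flag_comparable[OF F xy(1,2)] rank_mono_in_flag[OF F] xy by (metis less_irrefl)

lemma leq_if_rank_le: assumes F: "flag \<Phi>" and xy: "x \<in> \<Phi>" "y \<in> \<Phi>" "rank x \<le> rank y" shows "leq x y"
proof -
  have sP: "\<Phi> \<subseteq> P" using F flag_subset by auto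
  show ?thesis
  proof (cases "x = y")
    case True then show ?thesis using leq_refl sP xy by auto
  next
    case False
    show ?thesis
    proof (rule ccontr)
      assume "\<not> leq x y"
      then have "leq y x" using flag_comparable[OF F xy(1,2)] by blast
      then have "rank y < rank x" using rank_mono_in_flag[OF F xy(2,1)] False by auto
      then show False using xy by simp
    qed
  qed
qed

lemma rank_range: assumes F: "flag \<Phi>" and x: "x \<in> \<Phi>" shows "-1 \<le> rank x \<and> rank x \<le> 4"
proof -
  have fin: "finite \<Phi>" "card \<Phi> = 6" using F flag_card by auto
  have "below \<Phi> x \<subseteq> \<Phi> - {x}" by (auto simp: below_def)
  then have "card (below \<Phi> x) \<le> card (\<Phi> - {x})" using fin by (intro card_mono) auto
  also have "\<dots> = 5" using fin x by simp
  finally show ?thesis using rank_in_flag[OF F x] by simp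
qed

lemma rank_image: assumes F: "flag \<Phi>" shows "rank ` \<Phi> = {-1..4}"
proof -
  have fin: "finite \<Phi>" "card \<Phi> = 6" using F flag_card by auto
  have sub: "rank ` \<Phi> \<subseteq> {-1..4}" using rank_range[OF F] by auto
  have "inj_on rank \<Phi>" using rank_inj_in_flag[OF F] by (auto simp: inj_on_def)
  then have "card (rank ` \<Phi>) = 6" using fin by (simp add: card_image)
  moreover have "card {-1..(4::int)} = 6" by simp
  ultimately show ?thesis using sub by (metis card_subset_eq finite_atLeastAtMost_int)
qed

definition face :: "'a set \<Rightarrow> int \<Rightarrow> 'a" where
  "face \<Phi> j = (THE x. x \<in> \<Phi> \<and> rank x = j)"

lemma face_in_flag_rank: assumes F: "flag \<Phi>" and j: "-1 \<le> j" "j \<le> 4"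
  shows "face \<Phi> j \<in> \<Phi>" "rank (face \<Phi> j) = j"
proof -
  have "j \<in> rank ` \<Phi>" using rank_image[OF F] j by auto
  then obtain x where x: "x \<in> \<Phi>" "rank x = j" by blast
  have "\<exists>!x. x \<in> \<Phi> \<and> rank x = j" using x rank_inj_in_flag[OF F] by blast
  then have "face \<Phi> j \<in> \<Phi> \<and> rank (face \<Phi> j) = j" unfolding face_def by (rule theI')
  then show "face \<Phi> j \<in> \<Phi>" "rank (face \<Phi> j) = j" by auto
qed

lemma face_rank_eq: assumes F: "flag \<Phi>" and x: "x \<in> \<Phi>" shows "face \<Phi> (rank x) = x"
  using face_in_flag_rank[OF F] rank_range[OF F x] rank_inj_in_flag[OF F] x by blast

lemma face_eqI: assumes F: "flag \<Phi>" and x: "x \<in> \<Phi>" "rank x = j" shows "face \<Phi> j = x"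
  using face_rank_eq[OF F x(1)] x(2) by simp

lemma flag_eq_faces: assumes F: "flag \<Phi>" shows "\<Phi> = face \<Phi> ` {-1..4}"
proof
  show "\<Phi> \<subseteq> face \<Phi> ` {-1..4}" using face_rank_eq[OF F] rank_range[OF F] by (metis atLeastAtMost_iff image_eqI subsetI)
  show "face \<Phi> ` {-1..4} \<subseteq> \<Phi>" using face_in_flag_rank[OF F] by auto
qed

lemma least_face_in_flag: assumes F: "flag \<Phi>" and m: "m \<in> P" "\<forall>x\<in>P. leq m x" shows "m \<in> \<Phi>"
proof -
  have "po_chain P leq (insert m \<Phi>)" using flag_chain[OF F] m flag_subset[OF F] by (auto simp: po_chain_def)
  then show ?thesis using flag_maximal[OF F m(1)] by blast
qed

lemma greatest_face_in_flag: assumes F: "flag \<Phi>" and M: "M \<in> P" "\<forall>x\<in>P. leq x M" shows "M \<in> \<Phi>"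
proof -
  have "po_chain P leq (insert M \<Phi>)" using flag_chain[OF F] M flag_subset[OF F] by (auto simp: po_chain_def)
  then show ?thesis using flag_maximal[OF F M(1)] by blast
qed

lemma rank_least_face: assumes m: "m \<in> P" "\<forall>x\<in>P. leq m x" shows "rank m = -1"
proof -
  obtain \<Phi> where F: "flag \<Phi>" "m \<in> \<Phi>" using face_in_some_flag m by blast
  have "below \<Phi> m = {}" using m flag_subset[OF F(1)] leq_antisym by (auto simp: below_def)
  then show ?thesis using rank_in_flag[OF F] by simp
qed

lemma rank_greatest_face: assumes M: "M \<in> P" "\<forall>x\<in>P. leq x M" shows "rank M = 4"
proof -
  obtain \<Phi> where F: "flag \<Phi>" "M \<in> \<Phi>" using face_in_some_flag M by blast
  have "below \<Phi> M = \<Phi> - {M}" using M flag_subset[OF F(1)] by (auto simp: below_def)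
  then show ?thesis using rank_in_flag[OF F] flag_card[OF F(1)] F by simp
qed

definition between :: "'a \<Rightarrow> 'a \<Rightarrow> 'a set" where
  "between lo hi = {H\<in>P. H \<noteq> lo \<and> H \<noteq> hi \<and> leq lo H \<and> leq H hi}"

definition other_face :: "'a set \<Rightarrow> int \<Rightarrow> 'a" where
  "other_face \<Phi> j = (THE h. h \<in> between (face \<Phi> (j - 1)) (face \<Phi> (j + 1)) \<and> h \<noteq> face \<Phi> j)"

definition adj :: "int \<Rightarrow> 'a set \<Rightarrow> 'a set" where
  "adj j \<Phi> = insert (other_face \<Phi> j) (\<Phi> - {face \<Phi> j})"

lemma face_mem: "flag \<Phi> \<Longrightarrow> -1 \<le> j \<Longrightarrow> j \<le> 4 \<Longrightarrow> face \<Phi> j \<in> P"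
  using face_in_flag_rank flag_subset by blast

lemma face_leq: "flag \<Phi> \<Longrightarrow> -1 \<le> i \<Longrightarrow> i \<le> j \<Longrightarrow> j \<le> 4 \<Longrightarrow> leq (face \<Phi> i) (face \<Phi> j)"
proof -
  assume F: "flag \<Phi>" and ij: "-1 \<le> i" "i \<le> j" "j \<le> 4"
  have "j \<ge> -1" "i \<le> 4" using ij by auto
  then have "face \<Phi> i \<in> \<Phi>" "face \<Phi> j \<in> \<Phi>" "rank (face \<Phi> i) = i" "rank (face \<Phi> j) = j"
    using face_in_flag_rank[OF F ij(1)] face_in_flag_rank[OF F _ ij(3)] by auto
  then show ?thesis using leq_if_rank_le[OF F] ij by simp
qed

lemma face_inj: "flag \<Phi> \<Longrightarrow> -1 \<le> i \<Longrightarrow> i \<le> 4 \<Longrightarrow> -1 \<le> j \<Longrightarrow> j \<le> 4 \<Longrightarrow> face \<Phi> i = face \<Phi> j \<Longrightarrow> i = j"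
proof -
  assume F: "flag \<Phi>" and ij: "-1 \<le> i" "i \<le> 4" "-1 \<le> j" "j \<le> 4" and e: "face \<Phi> i = face \<Phi> j"
  have a: "rank (face \<Phi> i) = i" using face_in_flag_rank(2)[OF F ij(1,2)] .
  have b: "rank (face \<Phi> j) = j" using face_in_flag_rank(2)[OF F ij(3,4)] .
  show "i = j" using a b e by metis
qed

lemma face_neq: "flag \<Phi> \<Longrightarrow> -1 \<le> i \<Longrightarrow> i \<le> 4 \<Longrightarrow> -1 \<le> j \<Longrightarrow> j \<le> 4 \<Longrightarrow> i \<noteq> j \<Longrightarrow> face \<Phi> i \<noteq> face \<Phi> j"
  using face_inj by blast

lemma between_neighbour_faces: assumes F: "flag \<Phi>" and j: "0 \<le> j" "j \<le> 3"
  shows "between (face \<Phi> (j - 1)) (face \<Phi> (j + 1)) = {face \<Phi> j, other_face \<Phi> j}" "other_face \<Phi> j \<noteq> face \<Phi> j"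
proof -
  let ?lo = "face \<Phi> (j - 1)" and ?hi = "face \<Phi> (j + 1)" and ?mid = "face \<Phi> j"
  have "face_rank P leq ?lo (j - 1)" "face_rank P leq ?hi (j + 1)"
    using face_in_flag_rank[OF F] face_mem[OF F] j by (simp_all add: face_rank_iff)
  moreover have "leq ?lo ?hi" using face_leq[OF F] j by simp
  ultimately have c2: "card (between ?lo ?hi) = 2" using diamond unfolding between_def by blast
  have mid: "?mid \<in> between ?lo ?hi"
  proof -
    have "face \<Phi> j \<noteq> face \<Phi> (j - 1)" "face \<Phi> j \<noteq> face \<Phi> (j + 1)" using face_neq[OF F] j by auto
    moreover have "leq ?lo ?mid" "leq ?mid ?hi" using face_leq[OF F] j by auto
    ultimately show ?thesis unfolding between_def using face_mem[OF F] j by auto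
  qed
  obtain p q where pq: "between ?lo ?hi = {p, q}" "p \<noteq> q" using c2 by (meson card_2_iff)
  then obtain h where h: "between ?lo ?hi = {?mid, h}" "h \<noteq> ?mid" using mid by auto
  have ex: "\<exists>!h. h \<in> between ?lo ?hi \<and> h \<noteq> ?mid" using h by auto
  have "other_face \<Phi> j \<in> between ?lo ?hi \<and> other_face \<Phi> j \<noteq> ?mid" unfolding other_face_def by (rule theI'[OF ex])
  then have "other_face \<Phi> j = h" using h by auto
  then show "between ?lo ?hi = {?mid, other_face \<Phi> j}" "other_face \<Phi> j \<noteq> ?mid" using h by auto
qed

lemma other_face_props: assumes F: "flag \<Phi>" and j: "0 \<le> j" "j \<le> 3"
  shows "other_face \<Phi> j \<in> P" "rank (other_face \<Phi> j) = j" "other_face \<Phi> j \<notin> \<Phi>" "other_face \<Phi> j \<noteq> face \<Phi> j"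
    "leq (face \<Phi> (j - 1)) (other_face \<Phi> j)" "leq (other_face \<Phi> j) (face \<Phi> (j + 1))"
proof -
  have b: "other_face \<Phi> j \<in> between (face \<Phi> (j - 1)) (face \<Phi> (j + 1))" using between_neighbour_faces[OF F j] by auto
  then show P: "other_face \<Phi> j \<in> P" and l: "leq (face \<Phi> (j - 1)) (other_face \<Phi> j)" and h: "leq (other_face \<Phi> j) (face \<Phi> (j + 1))"
    by (auto simp: between_def)
  have "rank (face \<Phi> (j - 1)) < rank (other_face \<Phi> j)" "rank (other_face \<Phi> j) < rank (face \<Phi> (j + 1))"
    using b rank_mono face_mem[OF F] j by (auto simp: between_def)
  then show r: "rank (other_face \<Phi> j) = j" using face_in_flag_rank[OF F] j by simp
  show ne: "other_face \<Phi> j \<noteq> face \<Phi> j" using between_neighbour_faces[OF F j] by simp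
  show "other_face \<Phi> j \<notin> \<Phi>" using face_eqI[OF F _ r] ne by metis
qed

lemma adj_flag: assumes F: "flag \<Phi>" and j: "0 \<le> j" "j \<le> 3" shows "flag (adj j \<Phi>)"
proof -
  note O = other_face_props[OF F j]
  have sP: "\<Phi> \<subseteq> P" using flag_subset[OF F] .
  have ch: "po_chain P leq (adj j \<Phi>)"
    unfolding po_chain_def adj_def
  proof (intro conjI ballI)
    show "insert (other_face \<Phi> j) (\<Phi> - {face \<Phi> j}) \<subseteq> P" using O sP by auto
  next
    fix x y assume x: "x \<in> insert (other_face \<Phi> j) (\<Phi> - {face \<Phi> j})" and y: "y \<in> insert (other_face \<Phi> j) (\<Phi> - {face \<Phi> j})"
    have key: "\<And>g. g \<in> \<Phi> - {face \<Phi> j} \<Longrightarrow> leq g (other_face \<Phi> j) \<or> leq (other_face \<Phi> j) g"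
    proof -
      fix g assume g: "g \<in> \<Phi> - {face \<Phi> j}"
      have rg: "rank g \<noteq> j" using g face_eqI[OF F] by auto
      have gr: "-1 \<le> rank g" "rank g \<le> 4" using rank_range[OF F] g by auto
      show "leq g (other_face \<Phi> j) \<or> leq (other_face \<Phi> j) g"
      proof (cases "rank g < j")
        case True
        then have "leq g (face \<Phi> (j - 1))" using leq_if_rank_le[OF F] g face_in_flag_rank[OF F] j by auto
        then show ?thesis using leq_trans[of g "face \<Phi> (j - 1)" "other_face \<Phi> j"] O sP g face_mem[OF F] j by auto
      next
        case False
        then have "leq (face \<Phi> (j + 1)) g" using rg leq_if_rank_le[OF F] g face_in_flag_rank[OF F] j by auto
        then show ?thesis using leq_trans[of "other_face \<Phi> j" "face \<Phi> (j + 1)" g] O sP g face_mem[OF F] j by auto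
      qed
    qed
    show "leq x y \<or> leq y x"
      using x y key flag_comparable[OF F] leq_refl O by auto
  qed
  have "card (adj j \<Phi>) = 6"
    using flag_card[OF F] face_in_flag_rank[OF F] O j by (simp add: adj_def)
  then show ?thesis using chain_card_6_is_flag ch by blast
qed

lemma adj_ne: assumes F: "flag \<Phi>" and j: "0 \<le> j" "j \<le> 3" shows "adj j \<Phi> \<noteq> \<Phi>"
proof -
  have "other_face \<Phi> j \<notin> \<Phi>" by (rule other_face_props(3)[OF F j])
  then show ?thesis unfolding adj_def by blast
qed

lemma flag_adj_adj: assumes F: "flag \<Phi>" and j: "0 \<le> j" "j \<le> 3" shows "flag_adj P leq \<Phi> j (adj j \<Phi>)"
  unfolding flag_adj_def
proof (intro conjI ballI impI)
  show "flag (adj j \<Phi>)" by (rule adj_flag[OF F j])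
  show "adj j \<Phi> \<noteq> \<Phi>" by (rule adj_ne[OF F j])
  fix x assume "x \<in> \<Phi>" "\<not> face_rank P leq x j"
  then show "x \<in> adj j \<Phi>" using face_in_flag_rank[OF F] face_mem[OF F] j by (auto simp: adj_def face_rank_iff)
qed

lemma flag_insert_diff:
  assumes F: "flag \<Phi>" and G: "flag \<Psi>" and f: "f \<in> \<Phi>" and sub: "\<Phi> - {f} \<subseteq> \<Psi>"
  obtains y where "y \<notin> \<Phi> - {f}" "\<Psi> = insert y (\<Phi> - {f})"
proof -
  have fin: "finite \<Phi>" "card \<Phi> = 6" "finite \<Psi>" "card \<Psi> = 6" using flag_card F G by auto
  then have "card (\<Psi> - (\<Phi> - {f})) = 1" using card_Diff_subset [OF _ sub] f by (simp add: finite_subset)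
  then obtain y where "\<Psi> - (\<Phi> - {f}) = {y}" by (meson card_1_singletonE)
  then show ?thesis using sub that by blast
qed

lemma flag_sharing_all_but_face:
  assumes F: "flag \<Phi>" and G: "flag \<Psi>" and j: "0 \<le> j" "j \<le> 3" and sub: "\<Phi> - {face \<Phi> j} \<subseteq> \<Psi>"
  shows "\<Psi> = \<Phi> \<or> \<Psi> = adj j \<Phi>"
proof -
  obtain y where y: "y \<notin> \<Phi> - {face \<Phi> j}" and \<Psi>: "\<Psi> = insert y (\<Phi> - {face \<Phi> j})"
    using flag_insert_diff [OF F G _ sub] face_in_flag_rank [OF F] j by auto
  have yG: "y \<in> \<Psi>" and yP: "y \<in> P" using \<Psi> flag_subset [OF G] by auto
  have ry: "rank y = j"
  proof (rule ccontr)
    assume nr: "rank y \<noteq> j"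
    then have "face \<Phi> (rank y) \<in> \<Phi> - {face \<Phi> j}" "rank (face \<Phi> (rank y)) = rank y"
      using face_in_flag_rank [OF F] rank_range [OF G yG] face_inj [OF F] j by auto
    then show False using rank_inj_in_flag [OF G yG] \<Psi> y by (metis insertCI)
  qed
  have nb: "face \<Phi> (j - 1) \<in> \<Psi>" "face \<Phi> (j + 1) \<in> \<Psi>"
    "rank (face \<Phi> (j - 1)) = j - 1" "rank (face \<Phi> (j + 1)) = j + 1"
    using face_in_flag_rank [OF F] face_neq [OF F] j \<Psi> by auto
  then have "y \<in> between (face \<Phi> (j - 1)) (face \<Phi> (j + 1))"
    using leq_if_rank_le [OF G] yG yP ry by (auto simp: between_def)
  then have "y = face \<Phi> j \<or> y = other_face \<Phi> j" using between_neighbour_faces [OF F j] by auto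
  then show ?thesis using \<Psi> face_in_flag_rank [OF F] j by (auto simp: adj_def)
qed

lemma adj_unique:
  assumes F: "flag \<Phi>" and j: "0 \<le> j" "j \<le> 3" and A: "flag_adj P leq \<Phi> j \<Psi>"
  shows "\<Psi> = adj j \<Phi>"
proof -
  have G: "flag \<Psi>" and "\<Psi> \<noteq> \<Phi>" using A by (auto simp: flag_adj_def)
  moreover have "\<Phi> - {face \<Phi> j} \<subseteq> \<Psi>"
    using A face_eqI [OF F] flag_subset [OF F] by (auto simp: flag_adj_def face_rank_iff)
  ultimately show ?thesis using flag_sharing_all_but_face [OF F G j] by blast
qed

lemma face_adj: assumes F: "flag \<Phi>" and j: "0 \<le> j" "j \<le> 3" and i: "-1 \<le> i" "i \<le> 4"
  shows "face (adj j \<Phi>) i = (if i = j then other_face \<Phi> j else face \<Phi> i)"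
proof -
  have G: "flag (adj j \<Phi>)" by (rule adj_flag[OF F j])
  show ?thesis
  proof (cases "i = j")
    case True then show ?thesis using face_eqI[OF G] other_face_props[OF F j] by (simp add: adj_def)
  next
    case False
    then have "face \<Phi> i \<noteq> face \<Phi> j" using face_neq[OF F] i j by auto
    then have "face \<Phi> i \<in> adj j \<Phi>" using face_in_flag_rank(1)[OF F] i by (auto simp: adj_def)
    then show ?thesis using face_eqI[OF G] face_in_flag_rank[OF F] i False by simp
  qed
qed

lemma adj_adj: assumes F: "flag \<Phi>" and j: "0 \<le> j" "j \<le> 3" shows "adj j (adj j \<Phi>) = \<Phi>"
proof -
  have G: "flag (adj j \<Phi>)" by (rule adj_flag[OF F j])
  have "flag_adj P leq (adj j \<Phi>) j \<Phi>"
    unfolding flag_adj_def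
  proof (intro conjI ballI impI)
    show "flag \<Phi>" by fact
    show "\<Phi> \<noteq> adj j \<Phi>" using adj_ne[OF F j] by simp
    fix x assume x: "x \<in> adj j \<Phi>" "\<not> face_rank P leq x j"
    then show "x \<in> \<Phi>" using other_face_props[OF F j] by (auto simp: adj_def face_rank_iff)
  qed
  then show ?thesis using adj_unique[OF G j] by simp
qed

lemma other_face_adj: assumes F: "flag \<Phi>" and j: "0 \<le> j" "j \<le> 3" and i: "0 \<le> i" "i \<le> 3" and ij: "\<bar>i - j\<bar> \<ge> 2"
  shows "other_face (adj j \<Phi>) i = other_face \<Phi> i"
  unfolding other_face_def using face_adj[OF F j] i ij by auto

lemma adj_comm: assumes F: "flag \<Phi>" and j: "0 \<le> j" "j \<le> 3" and i: "0 \<le> i" "i \<le> 3" and ij: "\<bar>i - j\<bar> \<ge> 2"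
  shows "adj i (adj j \<Phi>) = adj j (adj i \<Phi>)"
proof -
  have e1: "adj i (adj j \<Phi>) = insert (other_face \<Phi> i) (insert (other_face \<Phi> j) (\<Phi> - {face \<Phi> j}) - {face \<Phi> i})"
    using face_adj[OF F j, of i] other_face_adj[OF F j i ij] i ij by (simp add: adj_def)
  have ji: "\<bar>j - i\<bar> \<ge> 2" using ij by simp
  have e2: "adj j (adj i \<Phi>) = insert (other_face \<Phi> j) (insert (other_face \<Phi> i) (\<Phi> - {face \<Phi> i}) - {face \<Phi> j})"
    using face_adj[OF F i, of j] other_face_adj[OF F i j ji] j ij by (simp add: adj_def)
  have "other_face \<Phi> j \<noteq> face \<Phi> i" "other_face \<Phi> i \<noteq> face \<Phi> j"
  proof -
    have "rank (other_face \<Phi> j) = j" "rank (other_face \<Phi> i) = i" using other_face_props(2)[OF F j] other_face_props(2)[OF F i] by auto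
    moreover have "rank (face \<Phi> i) = i" "rank (face \<Phi> j) = j" using face_in_flag_rank(2)[OF F] i j by auto
    moreover have "i \<noteq> j" using ij by auto
    ultimately show "other_face \<Phi> j \<noteq> face \<Phi> i" "other_face \<Phi> i \<noteq> face \<Phi> j" by metis+
  qed
  then show ?thesis using e1 e2 by auto
qed

lemma aut_flag: assumes A: "polytope_aut P leq \<sigma>" and F: "flag \<Phi>" shows "flag (\<sigma> ` \<Phi>)"
  unfolding is_flag_def
proof (intro conjI ballI impI)
  have sP: "\<Phi> \<subseteq> P" using flag_subset[OF F] .
  show ch: "po_chain P leq (\<sigma> ` \<Phi>)"
    using flag_chain[OF F] sP aut_mem[OF A] aut_leq[OF A] by (auto simp: po_chain_def subset_iff)
  fix y assume y: "y \<in> P" and ch2: "po_chain P leq (insert y (\<sigma> ` \<Phi>))"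
  obtain y' where y': "y' \<in> P" "y = \<sigma> y'" using aut_bij[OF A] y by (metis bij_betw_iff_bijections)
  have "po_chain P leq (insert y' \<Phi>)"
    unfolding po_chain_def
  proof (intro conjI ballI)
    show "insert y' \<Phi> \<subseteq> P" using y' sP by auto
    fix u v assume "u \<in> insert y' \<Phi>" "v \<in> insert y' \<Phi>"
    then have "\<sigma> u \<in> insert y (\<sigma> ` \<Phi>)" "\<sigma> v \<in> insert y (\<sigma> ` \<Phi>)" "u \<in> P" "v \<in> P" using y' sP by auto
    then show "leq u v \<or> leq v u" using ch2 aut_leq[OF A] unfolding po_chain_def by blast
  qed
  then have "y' \<in> \<Phi>" using flag_maximal[OF F y'(1)] by simp
  then show "y \<in> \<sigma> ` \<Phi>" using y' by simp
qed

lemma aut_rank: assumes A: "polytope_aut P leq \<sigma>" and x: "x \<in> P" shows "rank (\<sigma> x) = rank x"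
proof -
  obtain \<Phi> where F: "flag \<Phi>" "x \<in> \<Phi>" using face_in_some_flag x by blast
  have sP: "\<Phi> \<subseteq> P" using flag_subset[OF F(1)] .
  have G: "flag (\<sigma> ` \<Phi>)" using aut_flag[OF A F(1)] .
  have inj: "inj_on \<sigma> P" using aut_inj[OF A] .
  have "below (\<sigma> ` \<Phi>) (\<sigma> x) = \<sigma> ` below \<Phi> x"
    using sP x aut_leq[OF A] inj by (auto simp: below_def inj_on_def subset_iff)
  moreover have "card (\<sigma> ` below \<Phi> x) = card (below \<Phi> x)"
    using inj sP by (intro card_image) (auto simp: below_def intro: inj_on_subset)
  ultimately show ?thesis using rank_in_flag[OF G] rank_in_flag[OF F] F by simp
qed

lemma aut_adj: assumes A: "polytope_aut P leq \<sigma>" and F: "flag \<Phi>" and j: "0 \<le> j" "j \<le> 3"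
  shows "\<sigma> ` (adj j \<Phi>) = adj j (\<sigma> ` \<Phi>)"
proof -
  have G: "flag (\<sigma> ` \<Phi>)" using aut_flag[OF A F] .
  have sP: "\<Phi> \<subseteq> P" using flag_subset[OF F] .
  have aF: "flag (adj j \<Phi>)" using adj_flag[OF F j] .
  have inj: "inj_on \<sigma> P" using aut_inj[OF A] .
  have "flag_adj P leq (\<sigma> ` \<Phi>) j (\<sigma> ` (adj j \<Phi>))"
    unfolding flag_adj_def
  proof (intro conjI ballI impI)
    show "flag (\<sigma> ` adj j \<Phi>)" using aut_flag[OF A aF] .
    show "\<sigma> ` adj j \<Phi> \<noteq> \<sigma> ` \<Phi>"
    proof
      assume "\<sigma> ` adj j \<Phi> = \<sigma> ` \<Phi>"
      then have "adj j \<Phi> = \<Phi>" using inj sP flag_subset[OF aF] by (simp add: inj_on_image_eq_iff)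
      then show False using adj_ne[OF F j] by simp
    qed
    fix y assume y: "y \<in> \<sigma> ` \<Phi>" and nr: "\<not> face_rank P leq y j"
    then obtain x where x: "x \<in> \<Phi>" "y = \<sigma> x" by blast
    then have "rank x \<noteq> j" using nr aut_rank[OF A] sP aut_mem[OF A] by (auto simp: face_rank_iff)
    then have "x \<noteq> face \<Phi> j" using face_in_flag_rank(2)[OF F] j by auto
    then have "x \<in> adj j \<Phi>" using x by (simp add: adj_def)
    then show "y \<in> \<sigma> ` adj j \<Phi>" using x by simp
  qed
  then show ?thesis using adj_unique[OF G j] by simp
qed

lemma face_bottom: assumes F: "flag \<Phi>" shows "\<exists>m. face \<Phi> (-1) = m \<and> m \<in> P \<and> (\<forall>x\<in>P. leq m x)"
proof -
  obtain m where m: "m \<in> P" "\<forall>x\<in>P. leq m x" using has_least_face by blast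
  then have "m \<in> \<Phi>" "rank m = -1" using least_face_in_flag[OF F] rank_least_face by auto
  then show ?thesis using face_eqI[OF F] m by auto
qed

lemma face_top: assumes F: "flag \<Phi>" shows "\<exists>M. face \<Phi> 4 = M \<and> M \<in> P \<and> (\<forall>x\<in>P. leq x M)"
proof -
  obtain M where M: "M \<in> P" "\<forall>x\<in>P. leq x M" using has_greatest_face by blast
  then have "M \<in> \<Phi>" "rank M = 4" using greatest_face_in_flag[OF F] rank_greatest_face by auto
  then show ?thesis using face_eqI[OF F] M by auto
qed

lemma adjacent_flags_eq_adj: assumes A: "flag A" and B: "flag B" and ad: "adjacent_flags A B"
  shows "\<exists>t. 0 \<le> t \<and> t \<le> 3 \<and> B = adj t A"
proof -
  have finA: "finite A" using flag_card[OF A] by simp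
  have "card (A - B) = 1" using ad by (simp add: adjacent_flags_def)
  then obtain x where x: "A - B = {x}" by (meson card_1_singletonE)
  then have xA: "x \<in> A" and xB: "x \<notin> B" by auto
  define t where "t = rank x"
  have tr: "-1 \<le> t" "t \<le> 4" using rank_range[OF A xA] by (auto simp: t_def)
  have "t \<noteq> -1"
  proof
    assume "t = -1"
    obtain m where m: "face A (-1) = m" "m \<in> P" "\<forall>x\<in>P. leq m x" using face_bottom[OF A] by blast
    have "x = m" using face_eqI[OF A xA] \<open>t = -1\<close> m by (simp add: t_def)
    then show False using least_face_in_flag[OF B] m xB by simp
  qed
  moreover have "t \<noteq> 4"
  proof
    assume "t = 4"
    obtain M where M: "face A 4 = M" "M \<in> P" "\<forall>x\<in>P. leq x M" using face_top[OF A] by blast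
    have "x = M" using face_eqI[OF A xA] \<open>t = 4\<close> M by (simp add: t_def)
    then show False using greatest_face_in_flag[OF B] M xB by simp
  qed
  ultimately have t: "0 \<le> t" "t \<le> 3" using tr by auto
  have "flag_adj P leq A t B"
    unfolding flag_adj_def
  proof (intro conjI ballI impI)
    show "flag B" by fact
    show "B \<noteq> A" using xA xB by blast
    fix y assume y: "y \<in> A" "\<not> face_rank P leq y t"
    then have "y \<noteq> x" using flag_subset[OF A] xA by (auto simp: face_rank_iff t_def)
    then show "y \<in> B" using x y by blast
  qed
  then show ?thesis using adj_unique[OF A t] t by blast
qed

lemma aut_eq_one_if_fixes_flag: assumes T: "polytope_aut P leq \<tau>" and F: "flag \<Phi>" and fx: "\<tau> ` \<Phi> = \<Phi>"
  shows "\<tau> = \<one>\<^bsub>BijGroup P\<^esub>"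
proof (rule BijGroup_one_eqI)
  show "\<tau> \<in> Bij P" using T by (simp add: polytope_aut_def)
  fix x assume x: "x \<in> P"
  obtain \<Psi> where G: "flag \<Psi>" "x \<in> \<Psi>" using face_in_some_flag x by blast
  have "(\<lambda>A B. flag A \<and> flag B \<and> adjacent_flags A B \<and> \<Phi> \<inter> \<Psi> \<subseteq> A \<and> \<Phi> \<inter> \<Psi> \<subseteq> B)\<^sup>*\<^sup>* \<Phi> \<Psi>"
    using strong_flag_connectivity[OF F G(1)] .
  then have "\<tau> ` \<Psi> = \<Psi>"
  proof (induction rule: rtranclp_induct)
    case base then show ?case using fx .
  next
    case (step A B)
    then have A: "flag A" and B: "flag B" and ad: "adjacent_flags A B" by auto
    obtain t where t: "0 \<le> t" "t \<le> 3" "B = adj t A" using adjacent_flags_eq_adj[OF A B ad] by blast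
    then show ?case using aut_adj[OF T A t(1,2)] step.IH by simp
  qed
  then have "\<tau> x \<in> \<Psi>" using G by blast
  moreover have "rank (\<tau> x) = rank x" using aut_rank[OF T x] .
  ultimately show "\<tau> x = x" using rank_inj_in_flag[OF G(1)] G(2) by blast
qed

section \<open>Rank 2 sections and the orders of the rotations\<close>

text \<open>sec_flags \<Phi> j consists of the flags through the faces of \<Phi> outside ranks j-1 and j, i.e. the
  flags of the rank 2 section F(j+1)/F(j-2) of \<Phi>.\<close>

definition sec_frame :: "'a set \<Rightarrow> int \<Rightarrow> 'a set" where
  "sec_frame \<Phi> j = \<Phi> - {face \<Phi> (j - 1), face \<Phi> j}"

definition sec_flags :: "'a set \<Rightarrow> int \<Rightarrow> 'a set set" where
  "sec_flags \<Phi> j = {\<Psi>. flag \<Psi> \<and> sec_frame \<Phi> j \<subseteq> \<Psi>}"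

lemma face_in_sec_frame: assumes F: "flag \<Phi>" and i: "-1 \<le> i" "i \<le> 4" "i \<noteq> j - 1" "i \<noteq> j" and j: "1 \<le> j" "j \<le> 3"
  shows "face \<Phi> i \<in> sec_frame \<Phi> j"
proof -
  have "face \<Phi> i \<noteq> face \<Phi> (j - 1)" "face \<Phi> i \<noteq> face \<Phi> j" using face_neq[OF F] i j by auto
  then show ?thesis using face_in_flag_rank(1)[OF F i(1,2)] by (simp add: sec_frame_def)
qed

lemma sec_flags_face: assumes F: "flag \<Phi>" and j: "1 \<le> j" "j \<le> 3" and S: "\<Psi> \<in> sec_flags \<Phi> j"
  and i: "-1 \<le> i" "i \<le> 4" "i \<noteq> j - 1" "i \<noteq> j"
  shows "face \<Psi> i = face \<Phi> i"
proof -
  have G: "flag \<Psi>" and sub: "sec_frame \<Phi> j \<subseteq> \<Psi>" using S by (auto simp: sec_flags_def)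
  have "face \<Phi> i \<in> \<Psi>" using face_in_sec_frame[OF F i j] sub by auto
  then show ?thesis using face_eqI[OF G] face_in_flag_rank(2)[OF F i(1,2)] by simp
qed

lemma sec_frame_rank: assumes F: "flag \<Phi>" and g: "g \<in> sec_frame \<Phi> j"
  shows "rank g \<noteq> j - 1" "rank g \<noteq> j" "g \<in> \<Phi>"
proof -
  have gF: "g \<in> \<Phi>" using g by (simp add: sec_frame_def)
  then show "g \<in> \<Phi>" .
  have "face \<Phi> (rank g) = g" using face_rank_eq[OF F gF] .
  then show "rank g \<noteq> j - 1" "rank g \<noteq> j" using g by (auto simp: sec_frame_def)
qed

lemma sec_flags_self: "flag \<Phi> \<Longrightarrow> \<Phi> \<in> sec_flags \<Phi> j" by (auto simp: sec_flags_def sec_frame_def)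

lemma sec_flags_adj: assumes F: "flag \<Phi>" and j: "1 \<le> j" "j \<le> 3" and S: "\<Psi> \<in> sec_flags \<Phi> j"
  and t: "t = j - 1 \<or> t = j"
  shows "adj t \<Psi> \<in> sec_flags \<Phi> j"
proof -
  have G: "flag \<Psi>" and sub: "sec_frame \<Phi> j \<subseteq> \<Psi>" using S by (auto simp: sec_flags_def)
  have t': "0 \<le> t" "t \<le> 3" using t j by auto
  have "face \<Psi> t \<notin> sec_frame \<Phi> j"
  proof
    assume a: "face \<Psi> t \<in> sec_frame \<Phi> j"
    have "rank (face \<Psi> t) = t" using face_in_flag_rank(2)[OF G] t' by auto
    then show False using sec_frame_rank[OF F a] t by auto
  qed
  then have "sec_frame \<Phi> j \<subseteq> adj t \<Psi>" using sub by (auto simp: adj_def)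
  then show ?thesis using adj_flag[OF G t'] by (simp add: sec_flags_def)
qed

lemma sec_flags_finite: "finite {\<Psi>. flag \<Psi>} \<Longrightarrow> finite (sec_flags \<Phi> j)"
  by (rule finite_subset[of _ "{\<Psi>. flag \<Psi>}"]) (auto simp: sec_flags_def)

lemma sec_flags_induct: assumes F: "flag \<Phi>" and j: "1 \<le> j" "j \<le> 3" and S: "\<Psi> \<in> sec_flags \<Phi> j"
  and X0: "\<Phi> \<in> X"
  and Xj: "\<And>A. A \<in> X \<Longrightarrow> A \<in> sec_flags \<Phi> j \<Longrightarrow> adj j A \<in> X"
  and Xj1: "\<And>A. A \<in> X \<Longrightarrow> A \<in> sec_flags \<Phi> j \<Longrightarrow> adj (j - 1) A \<in> X"
  shows "\<Psi> \<in> X"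
proof -
  have G: "flag \<Psi>" and subP: "sec_frame \<Phi> j \<subseteq> \<Psi>" using S by (auto simp: sec_flags_def)
  have subF: "sec_frame \<Phi> j \<subseteq> \<Phi> \<inter> \<Psi>" using subP by (auto simp: sec_frame_def)
  have "(\<lambda>A B. flag A \<and> flag B \<and> adjacent_flags A B \<and> \<Phi> \<inter> \<Psi> \<subseteq> A \<and> \<Phi> \<inter> \<Psi> \<subseteq> B)\<^sup>*\<^sup>* \<Phi> \<Psi>"
    using strong_flag_connectivity[OF F G] .
  then show ?thesis
  proof (induction rule: rtranclp_induct)
    case base then show ?case using X0 .
  next
    case (step A B)
    then have A: "flag A" and B: "flag B" and ad: "adjacent_flags A B"
      and sA: "\<Phi> \<inter> \<Psi> \<subseteq> A" and sB: "\<Phi> \<inter> \<Psi> \<subseteq> B" and AX: "A \<in> X" by auto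
    have AS: "A \<in> sec_flags \<Phi> j" using A sA subF by (auto simp: sec_flags_def)
    obtain t where t: "0 \<le> t" "t \<le> 3" "B = adj t A" using adjacent_flags_eq_adj[OF A B ad] by blast
    have "t = j - 1 \<or> t = j"
    proof (rule ccontr)
      assume nt: "\<not> (t = j - 1 \<or> t = j)"
      then have "face A t = face \<Phi> t" using sec_flags_face[OF F j AS] t by auto
      moreover have "face \<Phi> t \<in> sec_frame \<Phi> j" using face_in_sec_frame[OF F _ _ _ _ j] nt t by auto
      ultimately have "face A t \<in> B" using subF sB by auto
      moreover have "face A t \<notin> adj t A" using other_face_props(4)[OF A t(1,2)] by (auto simp: adj_def)
      ultimately show False using t by simp
    qed
    then show ?case using Xj[OF AX AS] Xj1[OF AX AS] t by auto
  qed
qed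

definition sec_faces :: "'a set \<Rightarrow> int \<Rightarrow> 'a set" where
  "sec_faces \<Phi> j = {v\<in>P. rank v = j - 1 \<and> leq (face \<Phi> (j - 2)) v \<and> leq v (face \<Phi> (j + 1))}"

lemma sec_frame_comparable:
  assumes F: "flag \<Phi>" and j: "1 \<le> j" "j \<le> 3" and x: "x \<in> sec_frame \<Phi> j"
    and u: "u \<in> P" "leq (face \<Phi> (j - 2)) u" "leq u (face \<Phi> (j + 1))"
  shows "leq u x \<or> leq x u"
proof -
  have xF: "x \<in> \<Phi>" "rank x \<noteq> j - 1" "rank x \<noteq> j" using sec_frame_rank [OF F x] by auto
  have xP: "x \<in> P" using xF(1) flag_subset [OF F] by auto
  show ?thesis
  proof (cases "rank x < j - 1")
    case True
    then have "leq x (face \<Phi> (j - 2))"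
      using leq_if_rank_le [OF F xF(1)] face_in_flag_rank [OF F, of "j - 2"] j by simp
    then have "leq x u" using leq_trans [OF xP face_mem [OF F, of "j - 2"] u(1)] u(2) j by simp
    then show ?thesis ..
  next
    case False
    then have "leq (face \<Phi> (j + 1)) x"
      using leq_if_rank_le [OF F _ xF(1)] face_in_flag_rank [OF F, of "j + 1"] xF j by simp
    then have "leq u x" using leq_trans [OF u(1) face_mem [OF F, of "j + 1"] xP] u(3) j by simp
    then show ?thesis ..
  qed
qed

lemma sec_flags_inj:
  assumes F: "flag \<Phi>" and j: "1 \<le> j" "j \<le> 3"
  shows "inj_on (\<lambda>\<Psi>. (face \<Psi> (j - 1), face \<Psi> j)) (sec_flags \<Phi> j)"
proof (rule inj_onI)
  fix A B assume A: "A \<in> sec_flags \<Phi> j" and B: "B \<in> sec_flags \<Phi> j"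
    and e: "(face A (j - 1), face A j) = (face B (j - 1), face B j)"
  have "face A i = face B i" if "i \<in> {-1..4}" for i
    using e sec_flags_face [OF F j A] sec_flags_face [OF F j B] that by (cases "i = j - 1 \<or> i = j") auto
  then have "face A ` {-1..4} = face B ` {-1..4}" by (rule image_cong [OF refl])
  then show "A = B" using A B flag_eq_faces by (simp add: sec_flags_def)
qed

lemma sec_flags_faces:
  assumes F: "flag \<Phi>" and j: "1 \<le> j" "j \<le> 3" and S: "\<Psi> \<in> sec_flags \<Phi> j"
  shows "face \<Psi> (j - 1) \<in> sec_faces \<Phi> j" "face \<Psi> j \<in> between (face \<Psi> (j - 1)) (face \<Phi> (j + 1))"
proof -
  have G: "flag \<Psi>" using S by (simp add: sec_flags_def)
  have top_bottom: "face \<Psi> (j + 1) = face \<Phi> (j + 1)" "face \<Psi> (j - 2) = face \<Phi> (j - 2)"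
    using sec_flags_face [OF F j S] j by auto
  have "leq (face \<Psi> (j - 2)) (face \<Psi> (j - 1))" "leq (face \<Psi> (j - 1)) (face \<Psi> (j + 1))"
    using face_leq [OF G] j by auto
  then show "face \<Psi> (j - 1) \<in> sec_faces \<Phi> j"
    using face_mem [OF G] face_in_flag_rank [OF G] j top_bottom by (simp add: sec_faces_def)
  show "face \<Psi> j \<in> between (face \<Psi> (j - 1)) (face \<Phi> (j + 1))"
    using face_neq [OF G] face_leq [OF G] face_mem [OF G] j top_bottom [symmetric]
    by (simp add: between_def)
qed

lemma sec_flags_of_faces:
  assumes F: "flag \<Phi>" and j: "1 \<le> j" "j \<le> 3"
    and v: "v \<in> sec_faces \<Phi> j" and h: "h \<in> between v (face \<Phi> (j + 1))"
  shows "\<exists>\<Psi>\<in>sec_flags \<Phi> j. face \<Psi> (j - 1) = v \<and> face \<Psi> j = h"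
proof -
  let ?lo = "face \<Phi> (j - 2)" and ?hi = "face \<Phi> (j + 1)"
  let ?\<Psi> = "insert v (insert h (sec_frame \<Phi> j))"
  have hiP: "?hi \<in> P" "rank ?hi = j + 1" using face_mem [OF F] face_in_flag_rank [OF F] j by auto
  have vP: "v \<in> P" "rank v = j - 1" "leq ?lo v" "leq v ?hi" using v by (auto simp: sec_faces_def)
  have hP: "h \<in> P" "h \<noteq> v" "h \<noteq> ?hi" "leq v h" "leq h ?hi" using h by (auto simp: between_def)
  have rh: "rank h = j"
    using rank_mono [OF vP(1) hP(1) hP(4)] rank_mono [OF hP(1) hiP(1) hP(5) hP(3)] hP(2) vP(2) hiP(2)
    by auto
  have frame: "sec_frame \<Phi> j \<subseteq> P" using flag_subset [OF F] by (auto simp: sec_frame_def)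
  have "leq ?lo h" using leq_trans [OF face_mem [OF F] vP(1) hP(1)] vP(3) hP(4) j by simp
  then have "leq u x \<or> leq x u" if "u \<in> {v, h}" "x \<in> sec_frame \<Phi> j" for u x
    using that sec_frame_comparable [OF F j] vP hP by auto
  moreover have "leq x y \<or> leq y x" if "x \<in> sec_frame \<Phi> j" "y \<in> sec_frame \<Phi> j" for x y
    using that flag_comparable [OF F] by (auto simp: sec_frame_def)
  ultimately have chain: "po_chain P leq ?\<Psi>"
    using frame vP hP leq_refl unfolding po_chain_def by blast
  have "card (sec_frame \<Phi> j) = 4"
    using face_in_flag_rank [OF F] face_neq [OF F] j flag_card [OF F] by (simp add: sec_frame_def card_Diff_subset)
  moreover have "v \<notin> sec_frame \<Phi> j" "h \<notin> sec_frame \<Phi> j"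
    using sec_frame_rank [OF F] vP rh by auto
  ultimately have "card ?\<Psi> = 6" using hP(2) flag_card [OF F] by (simp add: sec_frame_def)
  then have G: "flag ?\<Psi>" by (rule chain_card_6_is_flag [OF chain])
  then have "?\<Psi> \<in> sec_flags \<Phi> j" by (auto simp: sec_flags_def)
  moreover have "face ?\<Psi> (j - 1) = v" "face ?\<Psi> j = h" using face_eqI [OF G] vP rh by auto
  ultimately show ?thesis by blast
qed

lemma card_sec_flags:
  assumes fin: "finite {\<Psi>. flag \<Psi>}" and F: "flag \<Phi>" and j: "1 \<le> j" "j \<le> 3"
  shows "card (sec_flags \<Phi> j) = 2 * card (sec_faces \<Phi> j)"
proof -
  let ?hi = "face \<Phi> (j + 1)" and ?faces = "\<lambda>\<Psi>. (face \<Psi> (j - 1), face \<Psi> j)"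
  define T where "T = Sigma (sec_faces \<Phi> j) (\<lambda>v. between v ?hi)"
  have img: "?faces ` sec_flags \<Phi> j = T"
    using sec_flags_faces [OF F j] sec_flags_of_faces [OF F j] by (force simp: T_def)
  have between_card: "card (between v ?hi) = 2" if "v \<in> sec_faces \<Phi> j" for v
    using that face_mem [OF F] face_in_flag_rank [OF F] j unfolding between_def
    by (intro diamond) (auto simp: sec_faces_def face_rank_iff)
  have "finite T" using img sec_flags_finite [OF fin] by (metis finite_imageI)
  moreover have "sec_faces \<Phi> j \<subseteq> fst ` T"
  proof
    fix v assume v: "v \<in> sec_faces \<Phi> j"
    then obtain h where "h \<in> between v ?hi" using between_card [OF v] by fastforce
    then show "v \<in> fst ` T" using v unfolding T_def by (metis SigmaI fst_conv image_eqI)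
  qed
  ultimately have finV: "finite (sec_faces \<Phi> j)" by (meson finite_imageI finite_subset)
  have "card (sec_flags \<Phi> j) = card T" using card_image [OF sec_flags_inj [OF F j]] img by simp
  also have "\<dots> = (\<Sum>v\<in>sec_faces \<Phi> j. card (between v ?hi))"
    unfolding T_def by (rule card_SigmaI) (use finV between_card in \<open>auto intro: card_ge_0_finite\<close>)
  also have "\<dots> = 2 * card (sec_faces \<Phi> j)" using between_card by simp
  finally show ?thesis .
qed

lemma card_sec_faces_2: assumes T: "has_type4 P leq p q r" and F: "flag \<Phi>" shows "card (sec_faces \<Phi> 2) = q"
proof -
  have "sec_faces \<Phi> 2 = {e\<in>P. face_rank P leq e 1 \<and> leq (face \<Phi> 0) e \<and> leq e (face \<Phi> 3)}"
    by (auto simp: sec_faces_def face_rank_iff)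
  moreover have "face_rank P leq (face \<Phi> 0) 0" "face_rank P leq (face \<Phi> 3) 3" "leq (face \<Phi> 0) (face \<Phi> 3)"
    using face_mem[OF F] face_in_flag_rank[OF F] face_leq[OF F] by (auto simp: face_rank_iff)
  ultimately show ?thesis using T unfolding has_type4_def by auto
qed

lemma card_sec_faces_3: assumes T: "has_type4 P leq p q r" and F: "flag \<Phi>" shows "card (sec_faces \<Phi> 3) = r"
proof -
  obtain M where M: "face \<Phi> 4 = M" "M \<in> P" "\<forall>x\<in>P. leq x M" using face_top[OF F] by blast
  have "sec_faces \<Phi> 3 = {f\<in>P. face_rank P leq f 2 \<and> leq (face \<Phi> 1) f}"
    using M by (auto simp: sec_faces_def face_rank_iff)
  moreover have "face_rank P leq (face \<Phi> 1) 1"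
    using face_mem[OF F] face_in_flag_rank[OF F] by (auto simp: face_rank_iff)
  ultimately show ?thesis using T unfolding has_type4_def by auto
qed

lemma aut_image_eq_iff:
  assumes F: "flag \<Phi>" and x: "polytope_aut P leq x" and y: "polytope_aut P leq y"
  shows "x ` \<Phi> = y ` \<Phi> \<longleftrightarrow> x = y"
proof
  interpret G: group "BijGroup P" by (rule group_BijGroup)
  let ?z = "inv\<^bsub>BijGroup P\<^esub> y \<otimes>\<^bsub>BijGroup P\<^esub> x"
  assume e: "x ` \<Phi> = y ` \<Phi>"
  have "?z ` \<Phi> = (inv\<^bsub>BijGroup P\<^esub> y \<otimes>\<^bsub>BijGroup P\<^esub> y) ` \<Phi>"
    using aut_image_mult [OF aut_inv [OF y] x] aut_image_mult [OF aut_inv [OF y] y] flag_subset [OF F] e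
    by simp
  then have "?z ` \<Phi> = \<Phi>" using BijGroup_one_image flag_subset [OF F] aut_carrier [OF y] by simp
  then have "?z = \<one>\<^bsub>BijGroup P\<^esub>" by (rule aut_eq_one_if_fixes_flag [OF aut_mult [OF aut_inv [OF y] x] F])
  then show "x = y" using aut_carrier [OF x] aut_carrier [OF y] by (simp add: G.inv_solve_left')
qed simp

lemma chiral_aut_image_not_adj:
  assumes ch: "chiral4 P leq" and F: "flag \<Phi>" and j: "0 \<le> j" "j \<le> 3"
    and x: "polytope_aut P leq x" and y: "polytope_aut P leq y"
  shows "x ` \<Phi> \<noteq> adj j (y ` \<Phi>)"
proof
  interpret G: group "BijGroup P" by (rule group_BijGroup)
  let ?y' = "inv\<^bsub>BijGroup P\<^esub> y"
  have aF: "adj j \<Phi> \<subseteq> P" using flag_subset [OF adj_flag [OF F j]] .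
  assume "x ` \<Phi> = adj j (y ` \<Phi>)"
  then have "(?y' \<otimes>\<^bsub>BijGroup P\<^esub> x) ` \<Phi> = ?y' ` y ` adj j \<Phi>"
    using aut_image_mult [OF aut_inv [OF y] x flag_subset [OF F]] aut_adj [OF y F j] by simp
  also have "\<dots> = adj j \<Phi>"
    using aut_image_mult [OF aut_inv [OF y] y aF] BijGroup_one_image [OF aF] aut_carrier [OF y] by simp
  finally have "same_orbit P leq \<Phi> (adj j \<Phi>)"
    unfolding same_orbit_def using aut_mult [OF aut_inv [OF y] x] by blast
  then show False using ch F j flag_adj_adj [OF F j] unfolding chiral4_def by blast
qed

lemma aut_pow_image_Suc:
  assumes F: "flag \<Phi>" and s: "polytope_aut P leq s" and j: "1 \<le> j" "j \<le> 3"
    and s_\<Phi>: "s ` \<Phi> = adj (j - 1) (adj j \<Phi>)"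
  shows "(s [^]\<^bsub>BijGroup P\<^esub> Suc k) ` \<Phi> = adj (j - 1) (adj j ((s [^]\<^bsub>BijGroup P\<^esub> k) ` \<Phi>))"
proof -
  have sk: "polytope_aut P leq (s [^]\<^bsub>BijGroup P\<^esub> k)" by (rule aut_pow_nat [OF s])
  have "(s [^]\<^bsub>BijGroup P\<^esub> Suc k) ` \<Phi> = (s [^]\<^bsub>BijGroup P\<^esub> k) ` s ` \<Phi>"
    using aut_image_mult [OF sk s flag_subset [OF F]] by simp
  also have "\<dots> = adj (j - 1) (adj j ((s [^]\<^bsub>BijGroup P\<^esub> k) ` \<Phi>))"
    using s_\<Phi> aut_adj [OF sk adj_flag [OF F] _ _] aut_adj [OF sk F] j by simp
  finally show ?thesis .
qed

lemma aut_pow_image_sec_flags: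
  assumes F: "flag \<Phi>" and s: "polytope_aut P leq s" and j: "1 \<le> j" "j \<le> 3"
    and s_\<Phi>: "s ` \<Phi> = adj (j - 1) (adj j \<Phi>)"
  shows "(s [^]\<^bsub>BijGroup P\<^esub> (k::nat)) ` \<Phi> \<in> sec_flags \<Phi> j"
proof (induction k)
  case 0
  then show ?case using BijGroup_one_image [OF flag_subset [OF F]] sec_flags_self [OF F] by simp
next
  case (Suc k)
  then show ?case
    using aut_pow_image_Suc [OF F s j s_\<Phi>] sec_flags_adj [OF F j] by simp
qed

lemma card_aut_pow_images:
  assumes fin: "finite {\<Psi>. flag \<Psi>}" and F: "flag \<Phi>" and s: "polytope_aut P leq s"
  shows "0 < group.ord (BijGroup P) s"
    and "card (range (\<lambda>k::nat. (s [^]\<^bsub>BijGroup P\<^esub> k) ` \<Phi>)) = group.ord (BijGroup P) s"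
proof -
  interpret G: group "BijGroup P" by (rule group_BijGroup)
  let ?img = "\<lambda>k::nat. (s [^]\<^bsub>BijGroup P\<^esub> k) ` \<Phi>"
  have s_G: "s \<in> carrier (BijGroup P)" by (rule aut_carrier [OF s])
  have img_eq: "?img k = ?img l \<longleftrightarrow> s [^]\<^bsub>BijGroup P\<^esub> k = s [^]\<^bsub>BijGroup P\<^esub> l" for k l
    by (rule aut_image_eq_iff [OF F aut_pow_nat [OF s] aut_pow_nat [OF s]])
  have "finite (range ?img)"
    using aut_flag [OF aut_pow_nat [OF s] F] by (intro finite_subset [OF _ fin]) auto
  then have "\<not> inj ?img" using finite_imageD by blast
  then obtain k l :: nat where "k \<noteq> l" "s [^]\<^bsub>BijGroup P\<^esub> k = s [^]\<^bsub>BijGroup P\<^esub> l"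
    using img_eq by (auto simp: inj_def)
  then obtain k l :: nat where "k < l" "s [^]\<^bsub>BijGroup P\<^esub> k = s [^]\<^bsub>BijGroup P\<^esub> l"
    by (metis linorder_neqE_nat)
  then have "s [^]\<^bsub>BijGroup P\<^esub> (l - k) = \<one>\<^bsub>BijGroup P\<^esub>" "l - k \<noteq> 0"
    using G.pow_eq_div2 [OF s_G, of l k] by auto
  then show pos: "0 < G.ord s" using G.ord_eq_0 [OF s_G] by auto
  have pow_mod: "s [^]\<^bsub>BijGroup P\<^esub> k = s [^]\<^bsub>BijGroup P\<^esub> (k mod G.ord s)" for k
  proof -
    have "s [^]\<^bsub>BijGroup P\<^esub> k = s [^]\<^bsub>BijGroup P\<^esub> (G.ord s * (k div G.ord s) + k mod G.ord s)"
      by (simp only: mult_div_mod_eq)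
    also have "\<dots> = (s [^]\<^bsub>BijGroup P\<^esub> G.ord s) [^]\<^bsub>BijGroup P\<^esub> (k div G.ord s) \<otimes>\<^bsub>BijGroup P\<^esub> s [^]\<^bsub>BijGroup P\<^esub> (k mod G.ord s)"
      using s_G by (simp only: G.nat_pow_mult [symmetric] G.nat_pow_pow G.nat_pow_closed)
    finally show ?thesis using s_G by simp
  qed
  have "range ?img = ?img ` {0..G.ord s - 1}"
  proof (intro subset_antisym subsetI)
    fix A assume "A \<in> range ?img"
    then obtain k where "A = ?img (k mod G.ord s)" using pow_mod by auto
    moreover have "k mod G.ord s \<in> {0..G.ord s - 1}" using mod_less_divisor [OF pos, of k] by simp
    ultimately show "A \<in> ?img ` {0..G.ord s - 1}" by blast
  qed auto
  moreover have "inj_on ?img {0..G.ord s - 1}"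
    using G.ord_inj [OF s_G] img_eq by (simp add: inj_on_def)
  ultimately show "card (range ?img) = G.ord s" using pos by (simp add: card_image)
qed

lemma sec_flags_eq_orbits:
  assumes F: "flag \<Phi>" and s: "polytope_aut P leq s" and j: "1 \<le> j" "j \<le> 3"
    and s_\<Phi>: "s ` \<Phi> = adj (j - 1) (adj j \<Phi>)"
    and period: "s [^]\<^bsub>BijGroup P\<^esub> (N::nat) = \<one>\<^bsub>BijGroup P\<^esub>" "0 < N"
  defines "Orb \<equiv> range (\<lambda>k::nat. (s [^]\<^bsub>BijGroup P\<^esub> k) ` \<Phi>)"
  shows "sec_flags \<Phi> j = Orb \<union> adj j ` Orb"
proof
  interpret G: group "BijGroup P" by (rule group_BijGroup)
  let ?img = "\<lambda>k::nat. (s [^]\<^bsub>BijGroup P\<^esub> k) ` \<Phi>"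
  have j': "0 \<le> j - 1" "j - 1 \<le> 3" "0 \<le> j" "j \<le> 3" using j by auto
  have img_flag: "flag (?img k)" for k by (rule aut_flag [OF aut_pow_nat [OF s] F])
  have img_period: "?img k = ?img (k + N)" for k
    using period aut_carrier [OF s] by (simp add: G.nat_pow_mult [symmetric])
  have adj_img: "adj (j - 1) (?img (Suc k)) = adj j (?img k)" for k
    using aut_pow_image_Suc [OF F s j s_\<Phi>, of k] adj_adj [OF adj_flag [OF img_flag j'(3,4)] j'(1,2)]
    by simp
  show "sec_flags \<Phi> j \<subseteq> Orb \<union> adj j ` Orb"
  proof
    fix \<Psi> assume "\<Psi> \<in> sec_flags \<Phi> j"
    then show "\<Psi> \<in> Orb \<union> adj j ` Orb"
    proof (rule sec_flags_induct [OF F j])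
      have "\<Phi> = ?img 0" using BijGroup_one_image [OF flag_subset [OF F]] by simp
      then show "\<Phi> \<in> Orb \<union> adj j ` Orb" unfolding Orb_def by blast
    next
      fix A assume "A \<in> Orb \<union> adj j ` Orb"
      then obtain k where "A = ?img k \<or> A = adj j (?img k)" unfolding Orb_def by blast
      moreover have "adj j (adj j (?img k)) = ?img k" by (rule adj_adj [OF img_flag j'(3,4)])
      ultimately show "adj j A \<in> Orb \<union> adj j ` Orb" unfolding Orb_def by auto
    next
      fix A assume "A \<in> Orb \<union> adj j ` Orb"
      then obtain k where "A = ?img k \<or> A = adj j (?img k)" unfolding Orb_def by blast
      moreover obtain m where "k + N = Suc m" using period(2) by (metis add_gr_0 Suc_pred)
      ultimately have "adj (j - 1) A = adj j (?img m) \<or> adj (j - 1) A = ?img (Suc k)"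
        using adj_img img_period [of k] aut_pow_image_Suc [OF F s j s_\<Phi>, of k] by auto
      then show "adj (j - 1) A \<in> Orb \<union> adj j ` Orb" unfolding Orb_def by blast
    qed
  qed
  show "Orb \<union> adj j ` Orb \<subseteq> sec_flags \<Phi> j"
    using aut_pow_image_sec_flags [OF F s j s_\<Phi>] sec_flags_adj [OF F j] by (auto simp: Orb_def)
qed

theorem chiral_ord_eq_card_sec_faces:
  assumes ch: "chiral4 P leq" and fin: "finite {\<Psi>. flag \<Psi>}" and F: "flag \<Phi>"
    and s: "polytope_aut P leq s" and j: "1 \<le> j" "j \<le> 3"
    and s_\<Phi>: "s ` \<Phi> = adj (j - 1) (adj j \<Phi>)"
  shows "group.ord (BijGroup P) s = card (sec_faces \<Phi> j)"
proof -
  interpret G: group "BijGroup P" by (rule group_BijGroup)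
  define Orb where "Orb = range (\<lambda>k::nat. (s [^]\<^bsub>BijGroup P\<^esub> k) ` \<Phi>)"
  have j': "0 \<le> j" "j \<le> 3" using j by auto
  have Orb_flag: "flag A" if "A \<in> Orb" for A
    using that aut_flag [OF aut_pow_nat [OF s] F] by (auto simp: Orb_def)
  have pos: "0 < G.ord s" and card_Orb: "card Orb = G.ord s"
    using card_aut_pow_images [OF fin F s] by (simp_all add: Orb_def)
  have sec: "sec_flags \<Phi> j = Orb \<union> adj j ` Orb"
    using sec_flags_eq_orbits [OF F s j s_\<Phi> _ pos] aut_carrier [OF s] by (simp add: Orb_def)
  have "Orb \<inter> adj j ` Orb = {}"
    using chiral_aut_image_not_adj [OF ch F j' aut_pow_nat [OF s] aut_pow_nat [OF s]]
    by (auto simp: Orb_def)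
  moreover have "inj_on (adj j) Orb"
    by (rule inj_onI) (metis adj_adj [OF Orb_flag j'])
  moreover have "finite Orb" using sec sec_flags_finite [OF fin] by (metis finite_Un)
  ultimately have "card (sec_flags \<Phi> j) = 2 * G.ord s"
    using sec card_Orb by (simp add: card_Un_disjoint card_image)
  then show ?thesis using card_sec_flags [OF fin F j] by simp
qed

lemma std_gens_image:
  assumes sg: "std_gens P leq \<Phi> s1 s2 s3"
  shows "flag \<Phi>" "polytope_aut P leq s1" "polytope_aut P leq s2" "polytope_aut P leq s3"
    "s1 ` \<Phi> = adj 0 (adj 1 \<Phi>)" "s2 ` \<Phi> = adj 1 (adj 2 \<Phi>)" "s3 ` \<Phi> = adj 2 (adj 3 \<Phi>)"
proof -
  show F: "flag \<Phi>" using sg by (simp add: std_gens_def)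
  have gen: "polytope_aut P leq s \<and> (\<exists>\<Psi>. flag_adj P leq \<Phi> i \<Psi> \<and> flag_adj P leq \<Psi> (i - 1) (s ` \<Phi>))"
    if "(i, s) \<in> {(1::int, s1), (2, s2), (3, s3)}" for i s
    using sg that unfolding std_gens_def by blast
  have image: "s ` \<Phi> = adj (i - 1) (adj i \<Phi>)"
    if mem: "(i, s) \<in> {(1::int, s1), (2, s2), (3, s3)}" for i s
  proof -
    have i: "1 \<le> i" "i \<le> 3" using mem by auto
    obtain \<Psi> where \<Psi>: "flag_adj P leq \<Phi> i \<Psi>" "flag_adj P leq \<Psi> (i - 1) (s ` \<Phi>)"
      using gen [OF mem] by blast
    have "\<Psi> = adj i \<Phi>" using adj_unique [OF F _ _ \<Psi>(1)] i by simp
    moreover have "flag \<Psi>" using \<Psi>(1) by (simp add: flag_adj_def)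
    ultimately show ?thesis using adj_unique [OF _ _ _ \<Psi>(2)] i by simp
  qed
  show "polytope_aut P leq s1" "polytope_aut P leq s2" "polytope_aut P leq s3"
    using gen by auto
  show "s1 ` \<Phi> = adj 0 (adj 1 \<Phi>)" "s2 ` \<Phi> = adj 1 (adj 2 \<Phi>)" "s3 ` \<Phi> = adj 2 (adj 3 \<Phi>)"
    using image [of 1 s1] image [of 2 s2] image [of 3 s3] by simp_all
qed

lemma aut_image_adj_adj:
  assumes x: "polytope_aut P leq x" and F: "flag \<Phi>"
    and a: "0 \<le> a" "a \<le> 3" and b: "0 \<le> b" "b \<le> 3"
  shows "x ` adj a (adj b \<Phi>) = adj a (adj b (x ` \<Phi>))"
  using aut_adj [OF x adj_flag [OF F b] a] aut_adj [OF x F b] by simp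

lemma aut_involution_if_commuting_adj:
  assumes x: "polytope_aut P leq x" and F: "flag \<Phi>" and x_\<Phi>: "x ` \<Phi> = adj a (adj b \<Phi>)"
    and a: "0 \<le> a" "a \<le> 3" and b: "0 \<le> b" "b \<le> 3" and ab: "\<bar>a - b\<bar> \<ge> 2"
  shows "x \<otimes>\<^bsub>BijGroup P\<^esub> x = \<one>\<^bsub>BijGroup P\<^esub>"
proof (rule aut_eq_one_if_fixes_flag [OF aut_mult [OF x x] F])
  have "(x \<otimes>\<^bsub>BijGroup P\<^esub> x) ` \<Phi> = adj a (adj b (adj a (adj b \<Phi>)))"
    using aut_image_mult [OF x x flag_subset [OF F]] aut_image_adj_adj [OF x F a b] x_\<Phi> by simp
  also have "\<dots> = adj a (adj a (adj b (adj b \<Phi>)))"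
    using adj_comm [OF adj_flag [OF F b] b a] ab by (simp add: abs_minus_commute)
  also have "\<dots> = \<Phi>"
    using adj_adj [OF F b] adj_adj [OF adj_flag [OF adj_flag [OF F b] b] a] adj_adj [OF F b] by simp
  finally show "(x \<otimes>\<^bsub>BijGroup P\<^esub> x) ` \<Phi> = \<Phi>" .
qed

lemma std_gens_rotation_triple:
  assumes sg: "std_gens P leq \<Phi> s1 s2 s3"
  shows "rotation_triple (BijGroup P) (inv\<^bsub>BijGroup P\<^esub> s1) (inv\<^bsub>BijGroup P\<^esub> s2) (inv\<^bsub>BijGroup P\<^esub> s3)"
proof -
  interpret G: group "BijGroup P" by (rule group_BijGroup)
  note S = std_gens_image [OF sg]
  note F = S(1)
  have carr: "s1 \<in> carrier (BijGroup P)" "s2 \<in> carrier (BijGroup P)" "s3 \<in> carrier (BijGroup P)"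
    using S aut_carrier by auto
  have adj_12: "adj 1 (adj 1 (adj 2 \<Phi>)) = adj 2 \<Phi>" and adj_23: "adj 2 (adj 2 (adj 3 \<Phi>)) = adj 3 \<Phi>"
    using adj_adj [OF adj_flag [OF F]] by simp_all
  have "(s2 \<otimes>\<^bsub>BijGroup P\<^esub> s1) ` \<Phi> = adj 0 (adj 2 \<Phi>)"
    using aut_image_mult [OF S(3,2) flag_subset [OF F]] aut_image_adj_adj [OF S(3) F] S(5,6) adj_12 by simp
  then have ab: "(s2 \<otimes>\<^bsub>BijGroup P\<^esub> s1) \<otimes>\<^bsub>BijGroup P\<^esub> (s2 \<otimes>\<^bsub>BijGroup P\<^esub> s1) = \<one>\<^bsub>BijGroup P\<^esub>"
    by (rule aut_involution_if_commuting_adj [OF aut_mult [OF S(3,2)] F]) simp_all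
  have s32: "(s3 \<otimes>\<^bsub>BijGroup P\<^esub> s2) ` \<Phi> = adj 1 (adj 3 \<Phi>)"
    using aut_image_mult [OF S(4,3) flag_subset [OF F]] aut_image_adj_adj [OF S(4) F] S(6,7) adj_23 by simp
  then have bc: "(s3 \<otimes>\<^bsub>BijGroup P\<^esub> s2) \<otimes>\<^bsub>BijGroup P\<^esub> (s3 \<otimes>\<^bsub>BijGroup P\<^esub> s2) = \<one>\<^bsub>BijGroup P\<^esub>"
    by (rule aut_involution_if_commuting_adj [OF aut_mult [OF S(4,3)] F]) simp_all
  have "(s3 \<otimes>\<^bsub>BijGroup P\<^esub> s2 \<otimes>\<^bsub>BijGroup P\<^esub> s1) ` \<Phi> = adj 0 (adj 3 \<Phi>)"
    using aut_image_mult [OF aut_mult [OF S(4,3)] S(2) flag_subset [OF F]]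
      aut_image_adj_adj [OF aut_mult [OF S(4,3)] F] S(5) s32 adj_adj [OF adj_flag [OF F]] by simp
  then have abc: "(s3 \<otimes>\<^bsub>BijGroup P\<^esub> s2 \<otimes>\<^bsub>BijGroup P\<^esub> s1) \<otimes>\<^bsub>BijGroup P\<^esub> (s3 \<otimes>\<^bsub>BijGroup P\<^esub> s2 \<otimes>\<^bsub>BijGroup P\<^esub> s1) = \<one>\<^bsub>BijGroup P\<^esub>"
    by (rule aut_involution_if_commuting_adj [OF aut_mult [OF aut_mult [OF S(4,3)] S(2)] F]) simp_all
  show ?thesis
  proof
    show "inv\<^bsub>BijGroup P\<^esub> s1 \<otimes>\<^bsub>BijGroup P\<^esub> inv\<^bsub>BijGroup P\<^esub> s2 \<otimes>\<^bsub>BijGroup P\<^esub> inv\<^bsub>BijGroup P\<^esub> s1 \<otimes>\<^bsub>BijGroup P\<^esub> inv\<^bsub>BijGroup P\<^esub> s2 = \<one>\<^bsub>BijGroup P\<^esub>"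
      using arg_cong [OF ab, of "m_inv (BijGroup P)"] carr by (simp add: G.inv_mult_group G.m_assoc)
    show "inv\<^bsub>BijGroup P\<^esub> s2 \<otimes>\<^bsub>BijGroup P\<^esub> inv\<^bsub>BijGroup P\<^esub> s3 \<otimes>\<^bsub>BijGroup P\<^esub> inv\<^bsub>BijGroup P\<^esub> s2 \<otimes>\<^bsub>BijGroup P\<^esub> inv\<^bsub>BijGroup P\<^esub> s3 = \<one>\<^bsub>BijGroup P\<^esub>"
      using arg_cong [OF bc, of "m_inv (BijGroup P)"] carr by (simp add: G.inv_mult_group G.m_assoc)
    show "inv\<^bsub>BijGroup P\<^esub> s1 \<otimes>\<^bsub>BijGroup P\<^esub> inv\<^bsub>BijGroup P\<^esub> s2 \<otimes>\<^bsub>BijGroup P\<^esub> inv\<^bsub>BijGroup P\<^esub> s3 \<otimes>\<^bsub>BijGroup P\<^esub> inv\<^bsub>BijGroup P\<^esub> s1 \<otimes>\<^bsub>BijGroup P\<^esub> inv\<^bsub>BijGroup P\<^esub> s2 \<otimes>\<^bsub>BijGroup P\<^esub> inv\<^bsub>BijGroup P\<^esub> s3 = \<one>\<^bsub>BijGroup P\<^esub>"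
      using arg_cong [OF abc, of "m_inv (BijGroup P)"] carr by (simp add: G.inv_mult_group G.m_assoc)
  qed (use carr in simp_all)
qed

end

lemma amul_eq_amul_iff:
  assumes "x \<in> carrier (BijGroup P)" "y \<in> carrier (BijGroup P)"
    "x' \<in> carrier (BijGroup P)" "y' \<in> carrier (BijGroup P)"
  shows "amul P x y = amul P x' y' \<longleftrightarrow>
    inv\<^bsub>BijGroup P\<^esub> x \<otimes>\<^bsub>BijGroup P\<^esub> inv\<^bsub>BijGroup P\<^esub> y = inv\<^bsub>BijGroup P\<^esub> x' \<otimes>\<^bsub>BijGroup P\<^esub> inv\<^bsub>BijGroup P\<^esub> y'"
proof -
  interpret G: group "BijGroup P" by (rule group_BijGroup)
  show ?thesis
    using assms G.inv_inj [unfolded inj_on_def] by (auto simp: amul_def G.inv_mult_group [symmetric])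
qed

lemma apow_closed: "s \<in> carrier (BijGroup P) \<Longrightarrow> apow P s k \<in> carrier (BijGroup P)"
  by (simp add: apow_def group.int_pow_closed [OF group_BijGroup])

lemma inv_apow: "s \<in> carrier (BijGroup P) \<Longrightarrow> inv\<^bsub>BijGroup P\<^esub> (apow P s k) = inv\<^bsub>BijGroup P\<^esub> s [^]\<^bsub>BijGroup P\<^esub> k"
  by (simp add: apow_def group.int_pow_inv [OF group_BijGroup])

lemma tight_chiral_std_gens_ord:
  assumes ch: "chiral4 P leq" and ti: "tight4 P leq p q r" and sg: "std_gens P leq \<Phi> s1 s2 s3"
  shows "group.ord (BijGroup P) s2 = q" "group.ord (BijGroup P) s3 = r"
proof -
  interpret polytope4 P leq using ch by (simp add: polytope4_def chiral4_def)
  note S = std_gens_image [OF sg]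
  have fin: "finite {\<Psi>. flag \<Psi>}" and T: "has_type4 P leq p q r" using ti by (simp_all add: tight4_def)
  show "group.ord (BijGroup P) s2 = q"
    using chiral_ord_eq_card_sec_faces [OF ch fin S(1) S(3), of 2] S(6) card_sec_faces_2 [OF T S(1)] by simp
  show "group.ord (BijGroup P) s3 = r"
    using chiral_ord_eq_card_sec_faces [OF ch fin S(1) S(4), of 3] S(7) card_sec_faces_3 [OF T S(1)] by simp
qed

lemma tight_chiral_twisted_rotation_triple:
  fixes \<beta> :: nat
  assumes ch: "chiral4 P leq" and ti: "tight4 P leq p (2 ^ \<beta>) r" and sg: "std_gens P leq \<Phi> s1 s2 s3"
    and \<beta>: "5 \<le> \<beta>"
    and twist: "amul P (apow P s2 (-1)) s1 = amul P (apow P s1 (-1)) (apow P s2 (1 + 2 ^ (\<beta> - 1)))"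
  defines "e \<equiv> (2::int) ^ (\<beta> - 5)"
  shows "twisted_rotation_triple (BijGroup P) (inv\<^bsub>BijGroup P\<^esub> s1) (inv\<^bsub>BijGroup P\<^esub> s2) (inv\<^bsub>BijGroup P\<^esub> s3) e"
    and "inv\<^bsub>BijGroup P\<^esub> s2 [^]\<^bsub>BijGroup P\<^esub> (16 * e) \<noteq> \<one>\<^bsub>BijGroup P\<^esub>"
    and "inv\<^bsub>BijGroup P\<^esub> s3 [^]\<^bsub>BijGroup P\<^esub> (int r) = \<one>\<^bsub>BijGroup P\<^esub>"
proof -
  interpret G: group "BijGroup P" by (rule group_BijGroup)
  interpret polytope4 P leq using ch by (simp add: polytope4_def chiral4_def)
  note S = std_gens_image [OF sg]
  have carr: "s1 \<in> carrier (BijGroup P)" "s2 \<in> carrier (BijGroup P)" "s3 \<in> carrier (BijGroup P)"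
    using S aut_carrier by auto
  obtain d where d: "\<beta> = d + 5" using \<beta> by (metis add.commute le_iff_add)
  have pow: "(2::nat) ^ \<beta> = 32 * 2 ^ (\<beta> - 5)" "(2::int) ^ (\<beta> - 1) = 16 * e"
    by (simp_all add: d e_def power_add)
  have ord: "int (G.ord (inv\<^bsub>BijGroup P\<^esub> s2)) = 32 * e" "G.ord (inv\<^bsub>BijGroup P\<^esub> s3) = r"
    using tight_chiral_std_gens_ord [OF ch ti sg] carr pow by (simp_all add: e_def)
  interpret rotation_triple "BijGroup P" "inv\<^bsub>BijGroup P\<^esub> s1" "inv\<^bsub>BijGroup P\<^esub> s2" "inv\<^bsub>BijGroup P\<^esub> s3"
    by (rule std_gens_rotation_triple [OF sg])
  show "twisted_rotation_triple (BijGroup P) (inv\<^bsub>BijGroup P\<^esub> s1) (inv\<^bsub>BijGroup P\<^esub> s2) (inv\<^bsub>BijGroup P\<^esub> s3) e"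
  proof
    show "inv\<^bsub>BijGroup P\<^esub> s2 [^]\<^bsub>BijGroup P\<^esub> (32 * e) = \<one>\<^bsub>BijGroup P\<^esub>"
      using ord by (simp add: G.int_pow_eq_id)
    show "inv\<^bsub>BijGroup P\<^esub> (inv\<^bsub>BijGroup P\<^esub> s2) \<otimes>\<^bsub>BijGroup P\<^esub> inv\<^bsub>BijGroup P\<^esub> s1 =
        inv\<^bsub>BijGroup P\<^esub> (inv\<^bsub>BijGroup P\<^esub> s1) \<otimes>\<^bsub>BijGroup P\<^esub> inv\<^bsub>BijGroup P\<^esub> s2 [^]\<^bsub>BijGroup P\<^esub> (1 + 16 * e)"
      using twist carr pow by (simp add: amul_eq_amul_iff apow_closed inv_apow G.int_pow_neg)
  qed
  show "inv\<^bsub>BijGroup P\<^esub> s2 [^]\<^bsub>BijGroup P\<^esub> (16 * e) \<noteq> \<one>\<^bsub>BijGroup P\<^esub>"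
    using ord e_def by (simp add: G.int_pow_eq_id zdvd_mult_cancel)
  show "inv\<^bsub>BijGroup P\<^esub> s3 [^]\<^bsub>BijGroup P\<^esub> (int r) = \<one>\<^bsub>BijGroup P\<^esub>"
    using ord carr by (simp add: G.int_pow_eq_id)
qed

lemma no_tight_chiral_type_8:
  fixes \<beta> :: nat and \<epsilon> :: int
  assumes \<beta>: "5 \<le> \<beta>" and sign: "\<epsilon> = 1 \<or> \<epsilon> = -1"
    and ch: "chiral4 P leq" and ti: "tight4 P leq 4 (2 ^ \<beta>) 8" and sg: "std_gens P leq \<Phi> s1 s2 s3"
    and twist: "amul P (apow P s2 (-1)) s1 = amul P (apow P s1 (-1)) (apow P s2 (1 + 2 ^ (\<beta> - 1)))"
    and rel: "amul P s2 (apow P s3 2) = amul P (apow P s3 2) (apow P s2 (1 + \<epsilon> * 2 ^ (\<beta> - 2)))"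
  shows False
proof -
  define e :: int where "e = 2 ^ (\<beta> - 5)"
  obtain d where "\<beta> = d + 5" using \<beta> by (metis add.commute le_iff_add)
  then have pow: "(2::int) ^ (\<beta> - 2) = 8 * e" by (simp add: e_def power_add)
  note T = tight_chiral_twisted_rotation_triple [OF ch ti sg \<beta> twist, folded e_def]
  have carr: "s2 \<in> carrier (BijGroup P)" "s3 \<in> carrier (BijGroup P)"
    using sg by (auto simp: std_gens_def aut_carrier)
  interpret relations_type_8 "BijGroup P" "inv\<^bsub>BijGroup P\<^esub> s1" "inv\<^bsub>BijGroup P\<^esub> s2" "inv\<^bsub>BijGroup P\<^esub> s3" e \<epsilon>
  proof (rule relations_type_8.intro [OF T(1)], unfold_locales)
    show "inv\<^bsub>BijGroup P\<^esub> s3 [^]\<^bsub>BijGroup P\<^esub> (8::int) = \<one>\<^bsub>BijGroup P\<^esub>" using T(3) by simp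
    show "inv\<^bsub>BijGroup P\<^esub> s2 \<otimes>\<^bsub>BijGroup P\<^esub> inv\<^bsub>BijGroup P\<^esub> s3 [^]\<^bsub>BijGroup P\<^esub> (2::int) =
        inv\<^bsub>BijGroup P\<^esub> s3 [^]\<^bsub>BijGroup P\<^esub> (2::int) \<otimes>\<^bsub>BijGroup P\<^esub> inv\<^bsub>BijGroup P\<^esub> s2 [^]\<^bsub>BijGroup P\<^esub> (1 + \<epsilon> * (8 * e))"
      using rel carr pow by (simp add: amul_eq_amul_iff apow_closed inv_apow)
  qed (rule sign)
  show False using b_half_power_trivial T(2) by simp
qed

lemma no_tight_chiral_type_half:
  fixes \<beta> :: nat and \<epsilon> :: int
  assumes \<beta>: "5 \<le> \<beta>" and sign: "\<epsilon> = 1 \<or> \<epsilon> = -1"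
    and ch: "chiral4 P leq" and ti: "tight4 P leq 4 (2 ^ \<beta>) (2 ^ (\<beta> - 1))" and sg: "std_gens P leq \<Phi> s1 s2 s3"
    and twist: "amul P (apow P s2 (-1)) s1 = amul P (apow P s1 (-1)) (apow P s2 (1 + 2 ^ (\<beta> - 1)))"
    and rel3: "amul P (apow P s3 (-1)) s2 =
      amul P (apow P s2 (3 + \<epsilon> * 2 ^ (\<beta> - 2))) (apow P s3 (1 - 2 ^ (\<beta> - 2)))"
    and rel4: "amul P s3 (apow P s2 (-1)) =
      amul P (apow P s2 (-3 + \<epsilon> * 2 ^ (\<beta> - 2))) (apow P s3 (-1 + 2 ^ (\<beta> - 2)))"
  shows False
proof -
  interpret G: group "BijGroup P" by (rule group_BijGroup)
  define e :: int where "e = 2 ^ (\<beta> - 5)"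
  obtain d where "\<beta> = d + 5" using \<beta> by (metis add.commute le_iff_add)
  then have pow: "(2::int) ^ (\<beta> - 2) = 8 * e" "(2::int) ^ (\<beta> - 1) = 16 * e" by (simp_all add: e_def power_add)
  note T = tight_chiral_twisted_rotation_triple [OF ch ti sg \<beta> twist, folded e_def]
  have carr: "s2 \<in> carrier (BijGroup P)" "s3 \<in> carrier (BijGroup P)"
    using sg by (auto simp: std_gens_def aut_carrier)
  interpret relations_type_half "BijGroup P" "inv\<^bsub>BijGroup P\<^esub> s1" "inv\<^bsub>BijGroup P\<^esub> s2" "inv\<^bsub>BijGroup P\<^esub> s3" e \<epsilon> "\<beta> - 5"
  proof (rule relations_type_half.intro [OF T(1)], unfold_locales)
    show "e = 2 ^ (\<beta> - 5)" by (simp add: e_def)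
    show "inv\<^bsub>BijGroup P\<^esub> s3 [^]\<^bsub>BijGroup P\<^esub> (16 * e) = \<one>\<^bsub>BijGroup P\<^esub>" using T(3) pow by simp
    show "inv\<^bsub>BijGroup P\<^esub> (inv\<^bsub>BijGroup P\<^esub> s3) \<otimes>\<^bsub>BijGroup P\<^esub> inv\<^bsub>BijGroup P\<^esub> s2 =
        inv\<^bsub>BijGroup P\<^esub> s2 [^]\<^bsub>BijGroup P\<^esub> (3 + \<epsilon> * (8 * e)) \<otimes>\<^bsub>BijGroup P\<^esub> inv\<^bsub>BijGroup P\<^esub> s3 [^]\<^bsub>BijGroup P\<^esub> (1 - 8 * e)"
      using rel3 carr pow by (simp add: amul_eq_amul_iff apow_closed inv_apow G.int_pow_neg)
    show "inv\<^bsub>BijGroup P\<^esub> s3 \<otimes>\<^bsub>BijGroup P\<^esub> inv\<^bsub>BijGroup P\<^esub> (inv\<^bsub>BijGroup P\<^esub> s2) =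
        inv\<^bsub>BijGroup P\<^esub> s2 [^]\<^bsub>BijGroup P\<^esub> (-3 + \<epsilon> * (8 * e)) \<otimes>\<^bsub>BijGroup P\<^esub> inv\<^bsub>BijGroup P\<^esub> s3 [^]\<^bsub>BijGroup P\<^esub> (-1 + 8 * e)"
      using rel4 carr pow by (simp add: amul_eq_amul_iff apow_closed inv_apow G.int_pow_neg)
  qed (rule sign)
  show False using b_half_power_trivial T(2) by simp
qed

theorem theorem5p11:
  fixes P :: "'a set" and leq :: "'a \<Rightarrow> 'a \<Rightarrow> bool"
    and \<beta> :: nat and \<epsilon> :: int
  assumes "\<beta> \<ge> 5" and "\<epsilon> \<in> {1, -1}"
  shows "\<not> (\<exists>\<Phi> s1 s2 s3. chiral4 P leq \<and> tight4 P leq 4 (2 ^ \<beta>) 8 \<and>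
             std_gens P leq \<Phi> s1 s2 s3 \<and>
             amul P (apow P s2 (-1)) s1 = amul P (apow P s1 (-1)) (apow P s2 (1 + 2 ^ (\<beta> - 1))) \<and>
             amul P s2 (apow P s3 2) = amul P (apow P s3 2) (apow P s2 (1 + \<epsilon> * 2 ^ (\<beta> - 2))))
       \<and> \<not> (\<exists>\<Phi> s1 s2 s3. chiral4 P leq \<and> tight4 P leq 4 (2 ^ \<beta>) (2 ^ (\<beta> - 1)) \<and>
             std_gens P leq \<Phi> s1 s2 s3 \<and>
             amul P (apow P s2 (-1)) s1 = amul P (apow P s1 (-1)) (apow P s2 (1 + 2 ^ (\<beta> - 1))) \<and>
             amul P (apow P s3 (-1)) s2 =
               amul P (apow P s2 (3 + \<epsilon> * 2 ^ (\<beta> - 2))) (apow P s3 (1 - 2 ^ (\<beta> - 2))) \<and>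
             amul P s3 (apow P s2 (-1)) =
               amul P (apow P s2 (-3 + \<epsilon> * 2 ^ (\<beta> - 2))) (apow P s3 (-1 + 2 ^ (\<beta> - 2))))"
proof -
  have sign: "\<epsilon> = 1 \<or> \<epsilon> = -1" using assms(2) by auto
  show ?thesis
    using no_tight_chiral_type_8 [OF assms(1) sign] no_tight_chiral_type_half [OF assms(1) sign] by blast
qed

end
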